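(* Let $\langle P[(\bot_k\otimes R[x_i])⅋(x_j^\perp\otimes Q)]\mid x_i\odot x_j^\perp,\Gamma\rangle$ be a proof graph, where $x$ is an arbitrary atom or a unit, and $x^\perp$ its dual. Then $\langle P[\bot_k\otimes(R[x_i]⅋(x_j^\perp\otimes Q))]\mid x_i\odot x_j^\perp,\Gamma\rangle$ is equivalent to it.
   Context: Write ⅋ for par and $\odot$ for the cut connective. A proof graph $\langle P\mid\Gamma\rangle$ is an MLL linking tree $P$ (generated by $\mathsf1\mid a\otimes a^\perp\mid a^\perp\otimes a\mid\bot\otimes L\mid L\otimes\bot\mid L⅋L$) with a sequent $\Gamma$ (cuts $A\odot A^\perp$ allowed as roots) sharing the same leaves, such that every switching (deleting one child edge per ⅋-node; $\odot$ acts like $\otimes$) is connected and acyclic. Equivalence $\sim$ is generated by commutativity/associativity of ⅋ in the linking, commutativity of $\otimes$, $\bot_i\otimes(Q\otimes\bot_j)\sim(\bot_i\otimes Q)\otimes\bot_j$, and $Q⅋(R\otimes\bot_i)\sim(Q⅋R)\otimes\bot_i$ under the side condition that in every extended switching with respect to $\bot_i$ (switching with the edge from $\bot_i$ to its parent also removed) no node of $Q$ is connected to $\bot_i$. $P[\;],R[\;]$ are linking contexts, $Q$ a linking; indices distinguish leaf occurrences. *)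

theory Defs
  imports "HOL-Library.Multiset"
begin

datatype lit = Atom nat | NAtom nat | One | Bot

fun dlit :: "lit \<Rightarrow> lit" where
  "dlit (Atom a) = NAtom a"
| "dlit (NAtom a) = Atom a"
| "dlit One = Bot"
| "dlit Bot = One"

text \<open>A leaf occurrence is a literal together with an index distinguishing occurrences.\<close>
type_synonym leaf = "lit \<times> nat"

text \<open>Trees used both for linkings (Tens, Par) and for sequent formulas (Tens, Par, and Cut at roots).\<close>
datatype 'l tree = Leaf 'l | Tens "'l tree" "'l tree" | Par "'l tree" "'l tree" | Cut "'l tree" "'l tree"

fun leaves :: "'l tree \<Rightarrow> 'l list" where
  "leaves (Leaf l) = [l]"
| "leaves (Tens a b) = leaves a @ leaves b"
| "leaves (Par a b) = leaves a @ leaves b"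
| "leaves (Cut a b) = leaves a @ leaves b"

inductive linking :: "leaf tree \<Rightarrow> bool" where
  l_one:  "linking (Leaf (One, i))"
| l_ax1:  "linking (Tens (Leaf (Atom a, i)) (Leaf (NAtom a, j)))"
| l_ax2:  "linking (Tens (Leaf (NAtom a, i)) (Leaf (Atom a, j)))"
| l_botl: "linking L \<Longrightarrow> linking (Tens (Leaf (Bot, i)) L)"
| l_botr: "linking L \<Longrightarrow> linking (Tens L (Leaf (Bot, i)))"
| l_par:  "linking L1 \<Longrightarrow> linking L2 \<Longrightarrow> linking (Par L1 L2)"

fun cut_free :: "'l tree \<Rightarrow> bool" where
  "cut_free (Leaf l) = True"
| "cut_free (Tens a b) = (cut_free a \<and> cut_free b)"
| "cut_free (Par a b) = (cut_free a \<and> cut_free b)"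
| "cut_free (Cut a b) = False"

fun dual :: "lit tree \<Rightarrow> lit tree" where
  "dual (Leaf l) = Leaf (dlit l)"
| "dual (Tens a b) = Par (dual a) (dual b)"
| "dual (Par a b) = Tens (dual a) (dual b)"
| "dual (Cut a b) = Cut (dual a) (dual b)"

definition erase :: "leaf tree \<Rightarrow> lit tree" where
  "erase t = map_tree fst t"

definition seq_formula :: "leaf tree \<Rightarrow> bool" where
  "seq_formula A \<longleftrightarrow> cut_free A \<or>
     (\<exists>B C. A = Cut B C \<and> cut_free B \<and> cut_free C \<and> erase C = dual (erase B))"

fun pos :: "'l tree \<Rightarrow> bool list set" where
  "pos (Leaf l) = {[]}"
| "pos (Tens a b) = insert [] ((#) False ` pos a \<union> (#) True ` pos b)"
| "pos (Par a b) = insert [] ((#) False ` pos a \<union> (#) True ` pos b)"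
| "pos (Cut a b) = insert [] ((#) False ` pos a \<union> (#) True ` pos b)"

fun sub :: "'l tree \<Rightarrow> bool list \<Rightarrow> 'l tree" where
  "sub t [] = t"
| "sub (Tens a b) (c # p) = sub (if c then b else a) p"
| "sub (Par a b) (c # p) = sub (if c then b else a) p"
| "sub (Cut a b) (c # p) = sub (if c then b else a) p"
| "sub (Leaf l) (c # p) = Leaf l"

text \<open>Nodes: leaves are shared (identified by their index) between the linking and the sequent;
  inner nodes of the linking and of the k-th sequent formula are identified by position.\<close>
datatype node = LeafN nat | LinkN "bool list" | SeqN nat "bool list"

definition tnode :: "(bool list \<Rightarrow> node) \<Rightarrow> leaf tree \<Rightarrow> bool list \<Rightarrow> node" where
  "tnode mk t p = (case sub t p of Leaf l \<Rightarrow> LeafN (snd l) | _ \<Rightarrow> mk p)"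

definition is_par_at :: "'l tree \<Rightarrow> bool list \<Rightarrow> bool" where
  "is_par_at t p = (case sub t p of Par _ _ \<Rightarrow> True | _ \<Rightarrow> False)"

text \<open>A switching is given by a choice, for every (par) node, of the child edge to delete
  (False = left, True = right); it is only used at par nodes. Cut nodes act like tensor nodes.\<close>
type_synonym switching = "node \<Rightarrow> bool"

definition tnodes :: "(bool list \<Rightarrow> node) \<Rightarrow> leaf tree \<Rightarrow> node set" where
  "tnodes mk t = tnode mk t ` pos t"

definition tedges :: "(bool list \<Rightarrow> node) \<Rightarrow> leaf tree \<Rightarrow> switching \<Rightarrow> node set set" where
  "tedges mk t s = {{tnode mk t p, tnode mk t (p @ [b])} | p b.
       p @ [b] \<in> pos t \<and> \<not> (is_par_at t p \<and> s (tnode mk t p) = b)}"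

definition pg_nodes :: "leaf tree \<Rightarrow> leaf tree list \<Rightarrow> node set" where
  "pg_nodes P \<Gamma> = tnodes LinkN P \<union> (\<Union>k<length \<Gamma>. tnodes (SeqN k) (\<Gamma> ! k))"

definition sw_edges :: "leaf tree \<Rightarrow> leaf tree list \<Rightarrow> switching \<Rightarrow> node set set" where
  "sw_edges P \<Gamma> s = tedges LinkN P s \<union> (\<Union>k<length \<Gamma>. tedges (SeqN k) (\<Gamma> ! k) s)"

definition adj :: "node set set \<Rightarrow> node \<Rightarrow> node \<Rightarrow> bool" where
  "adj E u v \<longleftrightarrow> {u, v} \<in> E"

definition graph_connected :: "node set \<Rightarrow> node set set \<Rightarrow> bool" where
  "graph_connected V E \<longleftrightarrow> (\<forall>u\<in>V. \<forall>v\<in>V. (adj E)\<^sup>*\<^sup>* u v)"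

definition has_cycle :: "node set set \<Rightarrow> bool" where
  "has_cycle E \<longleftrightarrow> (\<exists>vs. length vs \<ge> 3 \<and> distinct vs \<and>
      (\<forall>i<length vs. {vs ! i, vs ! ((i + 1) mod length vs)} \<in> E))"

definition graph_acyclic :: "node set set \<Rightarrow> bool" where
  "graph_acyclic E \<longleftrightarrow> \<not> has_cycle E"

definition proof_graph :: "leaf tree \<Rightarrow> leaf tree list \<Rightarrow> bool" where
  "proof_graph P \<Gamma> \<longleftrightarrow> linking P \<and> (\<forall>A\<in>set \<Gamma>. seq_formula A)
     \<and> distinct (map snd (leaves P))
     \<and> mset (leaves P) = mset (concat (map leaves \<Gamma>))
     \<and> (\<forall>s. graph_connected (pg_nodes P \<Gamma>) (sw_edges P \<Gamma> s)
             \<and> graph_acyclic (sw_edges P \<Gamma> s))"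

datatype 'l ctx = Hole | CTensL "'l ctx" "'l tree" | CTensR "'l tree" "'l ctx"
  | CParL "'l ctx" "'l tree" | CParR "'l tree" "'l ctx"

fun fill :: "'l ctx \<Rightarrow> 'l tree \<Rightarrow> 'l tree" where
  "fill Hole t = t"
| "fill (CTensL c u) t = Tens (fill c t) u"
| "fill (CTensR u c) t = Tens u (fill c t)"
| "fill (CParL c u) t = Par (fill c t) u"
| "fill (CParR u c) t = Par u (fill c t)"

fun hpos :: "'l ctx \<Rightarrow> bool list" where
  "hpos Hole = []"
| "hpos (CTensL c u) = False # hpos c"
| "hpos (CTensR u c) = True # hpos c"
| "hpos (CParL c u) = False # hpos c"
| "hpos (CParR u c) = True # hpos c"

text \<open>Side condition for Q par (R * bot_i) ~ (Q par R) * bot_i, evaluated in the proof graph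
  P, Gamma where the redex Q par (R * bot_i) sits at position h of P: in every extended
  switching w.r.t. bot_i (the edge from bot_i to its parent in the linking also removed),
  no node of Q is connected to bot_i.\<close>
definition side_cond :: "leaf tree \<Rightarrow> leaf tree list \<Rightarrow> bool list \<Rightarrow> leaf tree \<Rightarrow> nat \<Rightarrow> bool" where
  "side_cond P \<Gamma> h Q i \<longleftrightarrow> (\<forall>s. \<forall>q\<in>pos Q.
      \<not> (adj (sw_edges P \<Gamma> s - {{tnode LinkN P (h @ [True]), LeafN i}}))\<^sup>*\<^sup>*
          (tnode LinkN P (h @ [False] @ q)) (LeafN i))"

text \<open>Local rewrite rules (one orientation each; the equivalence is their symmetric closure).\<close>
definition local_rule :: "leaf tree \<Rightarrow> leaf tree list \<Rightarrow> bool list \<Rightarrow> leaf tree \<Rightarrow> leaf tree \<Rightarrow> bool" where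
  "local_rule P \<Gamma> h A B \<longleftrightarrow>
     (\<exists>X Y. A = Par X Y \<and> B = Par Y X)
   \<or> (\<exists>X Y Z. A = Par X (Par Y Z) \<and> B = Par (Par X Y) Z)
   \<or> (\<exists>X Y. A = Tens X Y \<and> B = Tens Y X)
   \<or> (\<exists>Q i j. A = Tens (Leaf (Bot, i)) (Tens Q (Leaf (Bot, j)))
             \<and> B = Tens (Tens (Leaf (Bot, i)) Q) (Leaf (Bot, j)))
   \<or> (\<exists>Q R i. A = Par Q (Tens R (Leaf (Bot, i))) \<and> B = Tens (Par Q R) (Leaf (Bot, i))
             \<and> side_cond P \<Gamma> h Q i)"

definition pg_step :: "leaf tree list \<Rightarrow> leaf tree \<Rightarrow> leaf tree \<Rightarrow> bool" where
  "pg_step \<Gamma> P P' \<longleftrightarrow> proof_graph P \<Gamma> \<and> proof_graph P' \<Gamma> \<and>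
     (\<exists>C A B. P = fill C A \<and> P' = fill C B \<and> local_rule P \<Gamma> (hpos C) A B)"

definition pg_equiv :: "leaf tree list \<Rightarrow> leaf tree \<Rightarrow> leaf tree \<Rightarrow> bool" where
  "pg_equiv \<Gamma> P P' \<longleftrightarrow> proof_graph P \<Gamma> \<and>
     (\<lambda>X Y. pg_step \<Gamma> X Y \<or> pg_step \<Gamma> Y X)\<^sup>*\<^sup>* P P'"

end

theory Submission
  imports Defs
begin

text \<open>Five steps of the equivalence suffice. Commuting \<open>\<otimes>\<close> and \<open>\<parr>\<close> mirrors the positions
  below the rewritten node and so relabels every switching graph isomorphically; two such steps
  bring the redex into the form \<open>(x\<^sub>j\<^sup>\<bottom> \<otimes> Q) \<parr> (R[x\<^sub>i] \<otimes> \<bottom>\<^sub>k)\<close>, the rule for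
  \<open>\<parr>\<close> and \<open>\<bottom>\<close> turns it into \<open>((x\<^sub>j\<^sup>\<bottom> \<otimes> Q) \<parr> R[x\<^sub>i]) \<otimes> \<bottom>\<^sub>k\<close>, and two more
  commutations finish.

  The side condition of that rule holds because of the cut \<open>x\<^sub>i \<odot> x\<^sub>j\<^sup>\<bottom>\<close>. Suppose some
  node of \<open>x\<^sub>j\<^sup>\<bottom> \<otimes> Q\<close> were connected to \<open>\<bottom>\<^sub>k\<close> once the edge from \<open>\<bottom>\<^sub>k\<close> to its tensor
  node is removed, and follow the path from \<open>\<bottom>\<^sub>k\<close> to the first node \<open>m\<close> of the redex or the cut.
  After rerouting the par nodes inside the redex, the tensor node reaches \<open>m\<close> within the redex and
  the cut: down \<open>R\<close> to \<open>x\<^sub>i\<close>, across the cut and down \<open>x\<^sub>j\<^sup>\<bottom> \<otimes> Q\<close>. The first part of the path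
  avoids the redex, so it survives the rerouting, and with the edge between \<open>\<bottom>\<^sub>k\<close> and the tensor
  node it closes a cycle.

  Given the side condition, the switching graphs of the rewritten linking, pulled back along the
  relabelling of positions, arise from those of the original linking by edge exchanges that keep
  them spanning trees.\<close>

section \<open>Positions, subtrees and nodes\<close>

lemma Nil_in_pos [simp]: "[] \<in> pos t"
  by (cases t) auto

lemma pos_append_prefix: "p @ q \<in> pos t \<Longrightarrow> p \<in> pos t"
proof (induction t arbitrary: p)
  case (Tens a b) then show ?case by (cases p) auto
next
  case (Par a b) then show ?case by (cases p) auto
next
  case (Cut a b) then show ?case by (cases p) auto
qed (auto simp: Nil_is_append_conv)

lemma leaves_of_sub: "p \<in> pos t \<Longrightarrow> sub t p = Leaf l \<Longrightarrow> l \<in> set (leaves t)"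
proof (induction t arbitrary: p)
  case (Tens a b) then show ?case by (cases p) (auto split: if_splits)
next
  case (Par a b) then show ?case by (cases p) (auto split: if_splits)
next
  case (Cut a b) then show ?case by (cases p) (auto split: if_splits)
qed auto

definition nonleaf :: "'l tree \<Rightarrow> bool" where
  "nonleaf t \<longleftrightarrow> (\<forall>l. t \<noteq> Leaf l)"

lemma nonleaf_simps [simp]:
  "nonleaf (Tens a b)" "nonleaf (Par a b)" "nonleaf (Cut a b)" "\<not> nonleaf (Leaf l)"
  by (auto simp: nonleaf_def)

lemma tnode_Nil [simp]:
  "tnode mk (Tens a b) [] = mk []" "tnode mk (Par a b) [] = mk []" "tnode mk (Cut a b) [] = mk []"
  "tnode mk (Leaf l) p = LeafN (snd l)"
  unfolding tnode_def by (cases p; auto)+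

lemma tnode_Cons [simp]:
  "tnode mk (Tens a b) (c # q) = tnode (\<lambda>q. mk (c # q)) (if c then b else a) q"
  "tnode mk (Par a b) (c # q) = tnode (\<lambda>q. mk (c # q)) (if c then b else a) q"
  "tnode mk (Cut a b) (c # q) = tnode (\<lambda>q. mk (c # q)) (if c then b else a) q"
  unfolding tnode_def by (auto split: tree.split)

lemma is_par_at_simps [simp]:
  "is_par_at (Tens a b) (c # q) = is_par_at (if c then b else a) q"
  "is_par_at (Par a b) (c # q) = is_par_at (if c then b else a) q"
  "is_par_at (Cut a b) (c # q) = is_par_at (if c then b else a) q"
  "\<not> is_par_at (Tens a b) []" "is_par_at (Par a b) []" "\<not> is_par_at (Cut a b) []"
  "\<not> is_par_at (Leaf l) p"
  unfolding is_par_at_def by (cases p; auto)+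

lemma tnode_cases: "tnode mk t p = mk p \<or> (\<exists>l. tnode mk t p = LeafN l)"
  unfolding tnode_def by (auto split: tree.split)

lemma tnode_nonleaf: "nonleaf (sub t p) \<Longrightarrow> tnode mk t p = mk p"
  unfolding tnode_def nonleaf_def by (cases "sub t p") auto

lemma tnode_parent: "p @ [c] \<in> pos t \<Longrightarrow> tnode mk t p = mk p"
proof (induction t arbitrary: p mk)
  case (Tens a b) then show ?case by (cases p) auto
next
  case (Par a b) then show ?case by (cases p) auto
next
  case (Cut a b) then show ?case by (cases p) auto
qed simp

lemma tnode_par: "is_par_at t p \<Longrightarrow> tnode mk t p = mk p"
  unfolding is_par_at_def tnode_def by (auto split: tree.splits)

lemma tnode_relabel: "(\<And>l. F (LeafN l) = LeafN l) \<Longrightarrow> tnode (\<lambda>q. F (mk q)) t p = F (tnode mk t p)"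
  unfolding tnode_def by (auto split: tree.split)

lemma LeafN_in_tnodes:
  assumes "LeafN l \<in> tnodes mk t" "\<And>p. mk p \<noteq> LeafN l"
  shows "l \<in> snd ` set (leaves t)"
proof -
  obtain p where p: "p \<in> pos t" "tnode mk t p = LeafN l"
    using assms(1) unfolding tnodes_def by force
  then obtain a where "sub t p = Leaf (a, l)"
    using assms(2) unfolding tnode_def by (auto split: tree.splits)
  then show ?thesis using leaves_of_sub[OF p(1)] by force
qed

section \<open>Switching graphs of a single tree\<close>

lemma tedges_iff:
  "e \<in> tedges mk t s \<longleftrightarrow> (\<exists>p b. e = {tnode mk t p, tnode mk t (p @ [b])} \<and> p @ [b] \<in> pos t
     \<and> \<not> (is_par_at t p \<and> s (tnode mk t p) = b))"
  unfolding tedges_def by (rule mem_Collect_eq)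

lemma tedgesI:
  "p @ [b] \<in> pos t \<Longrightarrow> \<not> (is_par_at t p \<and> s (tnode mk t p) = b)
   \<Longrightarrow> {tnode mk t p, tnode mk t (p @ [b])} \<in> tedges mk t s"
  unfolding tedges_iff by blast

lemma tnodes_iff: "n \<in> tnodes mk t \<longleftrightarrow> (\<exists>p\<in>pos t. n = tnode mk t p)"
  unfolding tnodes_def by blast

lemma tnodes_cases: "n \<in> tnodes mk t \<Longrightarrow> (\<exists>p. n = mk p) \<or> (\<exists>l. n = LeafN l)"
  unfolding tnodes_iff using tnode_cases by metis

lemma tedges_subset_tnodes:
  assumes "e \<in> tedges mk t s"
  shows "e \<subseteq> tnodes mk t"
proof -
  obtain p b where "e = {tnode mk t p, tnode mk t (p @ [b])}" "p @ [b] \<in> pos t"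
    using assms unfolding tedges_iff by blast
  moreover have "p \<in> pos t" using \<open>p @ [b] \<in> pos t\<close> by (rule pos_append_prefix)
  ultimately show ?thesis unfolding tnodes_def by blast
qed

lemma tedges_cong:
  assumes "\<And>p. p \<in> pos t \<Longrightarrow> s (mk p) = s' (mk p)"
  shows "tedges mk t s = tedges mk t s'"
proof -
  have switch_eq: "(is_par_at t p \<and> s (tnode mk t p) = b) = (is_par_at t p \<and> s' (tnode mk t p) = b)"
    if "p @ [b] \<in> pos t" for p b
    using assms[OF pos_append_prefix[OF that]] tnode_par[of t p mk] by auto
  show ?thesis
  proof (rule set_eqI)
    fix e show "e \<in> tedges mk t s \<longleftrightarrow> e \<in> tedges mk t s'"
    proof
      assume "e \<in> tedges mk t s"
      then obtain p b where "e = {tnode mk t p, tnode mk t (p @ [b])}" "p @ [b] \<in> pos t"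
        "\<not> (is_par_at t p \<and> s (tnode mk t p) = b)" unfolding tedges_iff by blast
      then show "e \<in> tedges mk t s'" using tedgesI switch_eq by metis
    next
      assume "e \<in> tedges mk t s'"
      then obtain p b where "e = {tnode mk t p, tnode mk t (p @ [b])}" "p @ [b] \<in> pos t"
        "\<not> (is_par_at t p \<and> s' (tnode mk t p) = b)" unfolding tedges_iff by blast
      then show "e \<in> tedges mk t s" using tedgesI switch_eq by metis
    qed
  qed
qed

lemma tedges_relabel:
  assumes "\<And>l. F (LeafN l) = LeafN l"
  shows "tedges (\<lambda>q. F (mk q)) t s = (`) F ` tedges mk t (\<lambda>n. s (F n))"
proof (rule set_eqI, rule iffI)
  note relabel = tnode_relabel[of F, OF assms]
  fix e assume "e \<in> tedges (\<lambda>q. F (mk q)) t s"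
  then obtain p b where e: "e = F ` {tnode mk t p, tnode mk t (p @ [b])}" "p @ [b] \<in> pos t"
    "\<not> (is_par_at t p \<and> s (F (tnode mk t p)) = b)" unfolding tedges_iff relabel by auto
  then have "{tnode mk t p, tnode mk t (p @ [b])} \<in> tedges mk t (\<lambda>n. s (F n))"
    by (intro tedgesI) simp_all
  then show "e \<in> (`) F ` tedges mk t (\<lambda>n. s (F n))" using e(1) by blast
next
  note relabel = tnode_relabel[of F, OF assms]
  fix e assume "e \<in> (`) F ` tedges mk t (\<lambda>n. s (F n))"
  then obtain e' where "e' \<in> tedges mk t (\<lambda>n. s (F n))" "e = F ` e'" by blast
  then obtain p b where e: "e = F ` e'" "e' = {tnode mk t p, tnode mk t (p @ [b])}" "p @ [b] \<in> pos t"
    "\<not> (is_par_at t p \<and> s (F (tnode mk t p)) = b)" unfolding tedges_iff by blast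
  then have "{tnode (\<lambda>q. F (mk q)) t p, tnode (\<lambda>q. F (mk q)) t (p @ [b])} \<in> tedges (\<lambda>q. F (mk q)) t s"
    by (intro tedgesI) (simp_all add: relabel)
  then show "e \<in> tedges (\<lambda>q. F (mk q)) t s" using e(1,2) by (simp add: relabel)
qed

lemma tnodes_relabel: "(\<And>l. F (LeafN l) = LeafN l) \<Longrightarrow> tnodes (\<lambda>q. F (mk q)) t = F ` tnodes mk t"
  unfolding tnodes_def using tnode_relabel[of F mk t] by (simp add: image_image)

definition binary :: "'l tree \<Rightarrow> 'l tree \<Rightarrow> 'l tree \<Rightarrow> bool" where
  "binary T X Y \<longleftrightarrow> T = Tens X Y \<or> T = Par X Y \<or> T = Cut X Y"

lemma binary_simps:
  assumes "binary T X Y"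
  shows "tnode mk T [] = mk []" "tnode mk T (c # q) = tnode (\<lambda>q. mk (c # q)) (if c then Y else X) q"
    "c # q \<in> pos T \<longleftrightarrow> q \<in> pos (if c then Y else X)"
    "is_par_at T (c # q) = is_par_at (if c then Y else X) q"
  using assms unfolding binary_def by auto

lemma tedges_child_subset:
  assumes "binary T X Y"
  shows "tedges (\<lambda>q. mk (c # q)) (if c then Y else X) s \<subseteq> tedges mk T s"
proof
  note bs = binary_simps[OF assms]
  fix e assume "e \<in> tedges (\<lambda>q. mk (c # q)) (if c then Y else X) s"
  then obtain p b where pb: "e = {tnode (\<lambda>q. mk (c # q)) (if c then Y else X) p,
      tnode (\<lambda>q. mk (c # q)) (if c then Y else X) (p @ [b])}"
    "p @ [b] \<in> pos (if c then Y else X)"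
    "\<not> (is_par_at (if c then Y else X) p \<and> s (tnode (\<lambda>q. mk (c # q)) (if c then Y else X) p) = b)"
    unfolding tedges_iff by blast
  have "{tnode mk T (c # p), tnode mk T ((c # p) @ [b])} \<in> tedges mk T s"
    using pb(2,3) bs(2)[of mk c p] bs(3)[of c "p @ [b]"] bs(4)[of c p] by (intro tedgesI) simp_all
  then show "e \<in> tedges mk T s" using pb(1) bs(2)[of mk c p] bs(2)[of mk c "p @ [b]"] by simp
qed

lemma tedges_binary:
  assumes "binary T X Y"
  shows "tedges mk T s =
      {{mk [], tnode (\<lambda>q. mk (b # q)) (if b then Y else X) []} | b. \<not> (is_par_at T [] \<and> s (mk []) = b)}
      \<union> tedges (\<lambda>q. mk (False # q)) X s \<union> tedges (\<lambda>q. mk (True # q)) Y s"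
    (is "_ = ?root \<union> ?left \<union> ?right")
proof (rule set_eqI, rule iffI)
  note bs = binary_simps[OF assms]
  fix e assume "e \<in> tedges mk T s"
  then obtain p b where pb: "e = {tnode mk T p, tnode mk T (p @ [b])}" "p @ [b] \<in> pos T"
    "\<not> (is_par_at T p \<and> s (tnode mk T p) = b)" unfolding tedges_iff by blast
  show "e \<in> ?root \<union> ?left \<union> ?right"
  proof (cases p)
    case Nil
    then show ?thesis using pb bs(1) bs(2)[of mk b "[]"] by auto
  next
    case (Cons c p')
    let ?mk = "\<lambda>q. mk (c # q)" and ?Z = "if c then Y else X"
    have "{tnode ?mk ?Z p', tnode ?mk ?Z (p' @ [b])} \<in> tedges ?mk ?Z s"
      using pb(2,3) Cons bs(2)[of mk c p'] bs(3)[of c "p' @ [b]"] bs(4)[of c p']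
      by (intro tedgesI) simp_all
    moreover have "e = {tnode ?mk ?Z p', tnode ?mk ?Z (p' @ [b])}"
      using pb(1) Cons bs(2)[of mk c p'] bs(2)[of mk c "p' @ [b]"] by simp
    ultimately show ?thesis by (cases c) simp_all
  qed
next
  note bs = binary_simps[OF assms]
  fix e assume "e \<in> ?root \<union> ?left \<union> ?right"
  then consider b where "e = {mk [], tnode (\<lambda>q. mk (b # q)) (if b then Y else X) []}"
      "\<not> (is_par_at T [] \<and> s (mk []) = b)"
    | "e \<in> ?left" | "e \<in> ?right"
    by blast
  then show "e \<in> tedges mk T s"
  proof cases
    case (1 b)
    have "{tnode mk T [], tnode mk T ([] @ [b])} \<in> tedges mk T s"
      using 1(2) bs(1) bs(3)[of b "[]"] by (intro tedgesI) simp_all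
    then show ?thesis using 1(1) bs(1) bs(2)[of mk b "[]"] by simp
  qed (use tedges_child_subset[OF assms, of mk False s] tedges_child_subset[OF assms, of mk True s] in auto)
qed

lemma tedges_Tens:
  "tedges mk (Tens X Y) s = {{mk [], tnode (\<lambda>q. mk (False # q)) X []}, {mk [], tnode (\<lambda>q. mk (True # q)) Y []}}
     \<union> tedges (\<lambda>q. mk (False # q)) X s \<union> tedges (\<lambda>q. mk (True # q)) Y s"
  by (subst tedges_binary[of _ X Y]) (auto simp: binary_def)

lemma tedges_Cut:
  "tedges mk (Cut X Y) s = {{mk [], tnode (\<lambda>q. mk (False # q)) X []}, {mk [], tnode (\<lambda>q. mk (True # q)) Y []}}
     \<union> tedges (\<lambda>q. mk (False # q)) X s \<union> tedges (\<lambda>q. mk (True # q)) Y s"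
  by (subst tedges_binary[of _ X Y]) (auto simp: binary_def)

lemma tedges_Par:
  "tedges mk (Par X Y) s =
     (if s (mk []) then {{mk [], tnode (\<lambda>q. mk (False # q)) X []}} else {{mk [], tnode (\<lambda>q. mk (True # q)) Y []}})
     \<union> tedges (\<lambda>q. mk (False # q)) X s \<union> tedges (\<lambda>q. mk (True # q)) Y s"
  by (subst tedges_binary[of _ X Y]) (auto simp: binary_def)

lemma tedges_Leaf: "tedges mk (Leaf l) s = {}"
  unfolding tedges_def by auto

lemma tnodes_binary:
  assumes "binary T X Y"
  shows "tnodes mk T = insert (mk []) (tnodes (\<lambda>q. mk (False # q)) X \<union> tnodes (\<lambda>q. mk (True # q)) Y)"
proof -
  have "pos T = insert [] ((#) False ` pos X \<union> (#) True ` pos Y)"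
    using assms unfolding binary_def by auto
  then show ?thesis unfolding tnodes_def by (simp add: image_Un image_image binary_simps[OF assms])
qed

lemma tnodes_simps:
  "tnodes mk (Tens X Y) = insert (mk []) (tnodes (\<lambda>q. mk (False # q)) X \<union> tnodes (\<lambda>q. mk (True # q)) Y)"
  "tnodes mk (Par X Y) = insert (mk []) (tnodes (\<lambda>q. mk (False # q)) X \<union> tnodes (\<lambda>q. mk (True # q)) Y)"
  "tnodes mk (Cut X Y) = insert (mk []) (tnodes (\<lambda>q. mk (False # q)) X \<union> tnodes (\<lambda>q. mk (True # q)) Y)"
  "tnodes mk (Leaf l) = {LeafN (snd l)}"
  by (simp_all add: tnodes_binary binary_def) (simp add: tnodes_def)

text \<open>\<open>route g q s\<close> makes every par node at a position \<open>g @ p\<close>, with \<open>p\<close> a proper prefix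
  of \<open>q\<close>, keep the edge towards \<open>g @ q\<close>.\<close>

definition route :: "bool list \<Rightarrow> bool list \<Rightarrow> switching \<Rightarrow> switching" where
  "route g q s n = (case n of
     LinkN p \<Rightarrow> if \<exists>p' c r. p = g @ p' \<and> q = p' @ c # r then \<not> q ! (length p - length g) else s n
   | _ \<Rightarrow> s n)"

lemma route_above: "q = p @ c # r \<Longrightarrow> route g q s (LinkN (g @ p)) = (\<not> c)"
  unfolding route_def by auto

lemma route_other: "(\<And>p c r. q = p @ c # r \<Longrightarrow> n \<noteq> LinkN (g @ p)) \<Longrightarrow> route g q s n = s n"
  unfolding route_def by (cases n) auto

lemma tedges_path_down:
  assumes "q \<in> pos t" "\<And>p c r. q = p @ c # r \<Longrightarrow> s (mk p) = (\<not> c)"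
  shows "(adj (tedges mk t s))\<^sup>*\<^sup>* (tnode mk t []) (tnode mk t q)"
  using assms
proof (induction q rule: rev_induct)
  case (snoc c q)
  have "(adj (tedges mk t s))\<^sup>*\<^sup>* (tnode mk t []) (tnode mk t q)"
    using snoc.prems pos_append_prefix by (intro snoc.IH) auto
  moreover have "{tnode mk t q, tnode mk t (q @ [c])} \<in> tedges mk t s"
    using snoc.prems tnode_parent[OF snoc.prems(1)] by (intro tedgesI) auto
  ultimately show ?case by (metis adj_def rtranclp.rtrancl_into_rtrancl)
qed simp

section \<open>Proof graphs with a linking context\<close>

lemma sub_fill: "sub (fill C t) (hpos C @ q) = sub t q"
  by (induction C) auto

lemma pos_fill: "hpos C @ q \<in> pos (fill C t) \<longleftrightarrow> q \<in> pos t"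
  by (induction C) auto

lemma fill_nonleaf: "nonleaf t \<Longrightarrow> nonleaf (fill C t)"
  by (induction C) auto

lemma tnode_fill: "tnode mk (fill C t) (hpos C @ q) = tnode (\<lambda>q. mk (hpos C @ q)) t q"
  unfolding tnode_def by (simp add: sub_fill)

lemma is_par_at_fill: "is_par_at (fill C t) (hpos C @ q) = is_par_at t q"
  unfolding is_par_at_def by (simp add: sub_fill)

lemma pos_fill_outside:
  "\<not> (\<exists>r. r \<noteq> [] \<and> p = hpos C @ r) \<Longrightarrow> p \<in> pos (fill C t) \<longleftrightarrow> p \<in> pos (fill C t')"
proof (induction C arbitrary: p)
  case Hole then show ?case by (cases p) auto
next
  case (CTensL c u) then show ?case by (cases p) auto
next
  case (CTensR u c) then show ?case by (cases p) auto
next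
  case (CParL c u) then show ?case by (cases p) auto
next
  case (CParR u c) then show ?case by (cases p) auto
qed

lemma tnode_fill_outside:
  "\<not> (\<exists>r. r \<noteq> [] \<and> p = hpos C @ r) \<Longrightarrow> nonleaf t \<Longrightarrow> nonleaf t'
   \<Longrightarrow> tnode mk (fill C t) p = tnode mk (fill C t') p"
proof (induction C arbitrary: p mk)
  case Hole then show ?case by (auto simp: tnode_nonleaf)
next
  case (CTensL c u) then show ?case by (cases p) auto
next
  case (CTensR u c) then show ?case by (cases p) auto
next
  case (CParL c u) then show ?case by (cases p) auto
next
  case (CParR u c) then show ?case by (cases p) auto
qed

lemma is_par_at_fill_outside:
  "\<not> (\<exists>r. p = hpos C @ r) \<Longrightarrow> is_par_at (fill C t) p = is_par_at (fill C t') p"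
proof (induction C arbitrary: p)
  case (CTensL c u) then show ?case by (cases p) auto
next
  case (CTensR u c) then show ?case by (cases p) auto
next
  case (CParL c u) then show ?case by (cases p) auto
next
  case (CParR u c) then show ?case by (cases p) auto
qed simp

lemma fill_outside_hole:
  assumes "\<not> (\<exists>r. p = hpos C @ r)" "nonleaf A" "nonleaf A'"
  shows "tnode mk (fill C A) p = tnode mk (fill C A') p"
    "is_par_at (fill C A) p = is_par_at (fill C A') p"
    "tnode mk (fill C A) (p @ [b]) = tnode mk (fill C A') (p @ [b])"
    "p @ [b] \<in> pos (fill C A) \<longleftrightarrow> p @ [b] \<in> pos (fill C A')"
proof -
  have child: "\<not> (\<exists>r. r \<noteq> [] \<and> p @ [b] = hpos C @ r)"
  proof
    assume "\<exists>r. r \<noteq> [] \<and> p @ [b] = hpos C @ r"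
    then obtain r where "r \<noteq> []" "p @ [b] = hpos C @ r" by blast
    then have "p = hpos C @ butlast r"
      by (metis append_butlast_last_id append_assoc butlast_append butlast_snoc)
    then show False using assms(1) by blast
  qed
  have "\<not> (\<exists>r. r \<noteq> [] \<and> p = hpos C @ r)" using assms(1) by blast
  then show "tnode mk (fill C A) p = tnode mk (fill C A') p"
    using assms(2,3) by (rule tnode_fill_outside)
  show "is_par_at (fill C A) p = is_par_at (fill C A') p"
    using assms(1) by (rule is_par_at_fill_outside)
  show "tnode mk (fill C A) (p @ [b]) = tnode mk (fill C A') (p @ [b])"
    using child assms(2,3) by (rule tnode_fill_outside)
  show "p @ [b] \<in> pos (fill C A) \<longleftrightarrow> p @ [b] \<in> pos (fill C A')"
    using child by (rule pos_fill_outside)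
qed

text \<open>Outside the hole, the nodes and edges of \<open>fill C A\<close> do not depend on the non-leaf
  filler \<open>A\<close>; they are read off from the arbitrary filler \<open>hole_filler\<close>.\<close>

definition hole_filler :: "leaf tree" where
  "hole_filler = Tens (Leaf (One, 0)) (Leaf (One, 0))"

definition ctx_edges :: "leaf ctx \<Rightarrow> switching \<Rightarrow> node set set" where
  "ctx_edges C s = {{tnode LinkN (fill C hole_filler) p, tnode LinkN (fill C hole_filler) (p @ [b])} | p b.
     p @ [b] \<in> pos (fill C hole_filler) \<and> \<not> (\<exists>r. p = hpos C @ r) \<and>
     \<not> (is_par_at (fill C hole_filler) p \<and> s (tnode LinkN (fill C hole_filler) p) = b)}"

definition ctx_nodes :: "leaf ctx \<Rightarrow> node set" where
  "ctx_nodes C = {tnode LinkN (fill C hole_filler) p | p.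
     p \<in> pos (fill C hole_filler) \<and> \<not> (\<exists>r. p = hpos C @ r)}"

definition outer_edges :: "leaf ctx \<Rightarrow> leaf tree list \<Rightarrow> switching \<Rightarrow> node set set" where
  "outer_edges C G s = ctx_edges C s \<union> (\<Union>k<length G. tedges (SeqN k) (G ! k) s)"

definition outer_nodes :: "leaf ctx \<Rightarrow> leaf tree list \<Rightarrow> node set" where
  "outer_nodes C G = ctx_nodes C \<union> (\<Union>k<length G. tnodes (SeqN k) (G ! k))"

lemma ctx_edges_iff:
  "e \<in> ctx_edges C s \<longleftrightarrow> (\<exists>p b. e = {tnode LinkN (fill C hole_filler) p, tnode LinkN (fill C hole_filler) (p @ [b])}
     \<and> p @ [b] \<in> pos (fill C hole_filler) \<and> \<not> (\<exists>r. p = hpos C @ r)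
     \<and> \<not> (is_par_at (fill C hole_filler) p \<and> s (tnode LinkN (fill C hole_filler) p) = b))"
  unfolding ctx_edges_def by (rule mem_Collect_eq)

lemma ctx_edges_subset_tedges_fill:
  assumes "nonleaf A"
  shows "ctx_edges C s \<subseteq> tedges LinkN (fill C A) s"
proof
  have filler: "nonleaf hole_filler" by (simp add: hole_filler_def)
  fix e assume "e \<in> ctx_edges C s"
  then obtain p b where e: "e = {tnode LinkN (fill C hole_filler) p, tnode LinkN (fill C hole_filler) (p @ [b])}"
    "p @ [b] \<in> pos (fill C hole_filler)" "\<not> (\<exists>r. p = hpos C @ r)"
    "\<not> (is_par_at (fill C hole_filler) p \<and> s (tnode LinkN (fill C hole_filler) p) = b)"
    unfolding ctx_edges_iff by blast
  note outside = fill_outside_hole[OF e(3) assms filler]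
  show "e \<in> tedges LinkN (fill C A) s" unfolding tedges_iff using e outside by metis
qed

lemma tedges_hole_subset_tedges_fill:
  "tedges (\<lambda>q. LinkN (hpos C @ q)) A s \<subseteq> tedges LinkN (fill C A) s"
proof
  fix e assume "e \<in> tedges (\<lambda>q. LinkN (hpos C @ q)) A s"
  then obtain r b where e: "e = {tnode (\<lambda>q. LinkN (hpos C @ q)) A r, tnode (\<lambda>q. LinkN (hpos C @ q)) A (r @ [b])}"
    "r @ [b] \<in> pos A" "\<not> (is_par_at A r \<and> s (tnode (\<lambda>q. LinkN (hpos C @ q)) A r) = b)"
    unfolding tedges_iff by blast
  have "{tnode LinkN (fill C A) (hpos C @ r), tnode LinkN (fill C A) ((hpos C @ r) @ [b])}
      \<in> tedges LinkN (fill C A) s"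
    using e(2,3) pos_fill[of C "r @ [b]" A] tnode_fill[of LinkN C A r] is_par_at_fill[of C A r]
    by (intro tedgesI) simp_all
  then show "e \<in> tedges LinkN (fill C A) s" using e(1) tnode_fill[of LinkN C A] by simp
qed

lemma tedges_fill:
  assumes "nonleaf A"
  shows "tedges LinkN (fill C A) s = ctx_edges C s \<union> tedges (\<lambda>q. LinkN (hpos C @ q)) A s"
proof (rule equalityI[OF subsetI])
  have filler: "nonleaf hole_filler" by (simp add: hole_filler_def)
  fix e assume "e \<in> tedges LinkN (fill C A) s"
  then obtain p b where e: "e = {tnode LinkN (fill C A) p, tnode LinkN (fill C A) (p @ [b])}"
    "p @ [b] \<in> pos (fill C A)" "\<not> (is_par_at (fill C A) p \<and> s (tnode LinkN (fill C A) p) = b)"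
    unfolding tedges_iff by blast
  show "e \<in> ctx_edges C s \<union> tedges (\<lambda>q. LinkN (hpos C @ q)) A s"
  proof (cases "\<exists>r. p = hpos C @ r")
    case True
    then obtain r where r: "p = hpos C @ r" by blast
    have "{tnode (\<lambda>q. LinkN (hpos C @ q)) A r, tnode (\<lambda>q. LinkN (hpos C @ q)) A (r @ [b])}
        \<in> tedges (\<lambda>q. LinkN (hpos C @ q)) A s"
      using e(2,3) r pos_fill[of C "r @ [b]" A] tnode_fill[of LinkN C A r] is_par_at_fill[of C A r]
      by (intro tedgesI) simp_all
    then show ?thesis using e(1) r tnode_fill[of LinkN C A] by simp
  next
    case False
    note outside = fill_outside_hole[OF False assms filler]
    have "e \<in> ctx_edges C s" unfolding ctx_edges_iff
      by (rule exI[of _ p], rule exI[of _ b]) (use e False outside in simp)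
    then show ?thesis by blast
  qed
qed (use ctx_edges_subset_tedges_fill[OF assms] tedges_hole_subset_tedges_fill in blast)

lemma tnodes_fill:
  assumes "nonleaf A"
  shows "tnodes LinkN (fill C A) = ctx_nodes C \<union> tnodes (\<lambda>q. LinkN (hpos C @ q)) A"
proof (rule set_eqI, rule iffI)
  have filler: "nonleaf hole_filler" by (simp add: hole_filler_def)
  fix n assume "n \<in> tnodes LinkN (fill C A)"
  then obtain p where p: "p \<in> pos (fill C A)" "n = tnode LinkN (fill C A) p" unfolding tnodes_iff by blast
  show "n \<in> ctx_nodes C \<union> tnodes (\<lambda>q. LinkN (hpos C @ q)) A"
  proof (cases "\<exists>r. p = hpos C @ r")
    case True
    then obtain r where "p = hpos C @ r" by blast
    then have "n \<in> tnodes (\<lambda>q. LinkN (hpos C @ q)) A"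
      using p pos_fill[of C r A] tnode_fill[of LinkN C A r] unfolding tnodes_iff by auto
    then show ?thesis by blast
  next
    case False
    have "p \<in> pos (fill C hole_filler)" "n = tnode LinkN (fill C hole_filler) p"
      using p False pos_fill_outside[of p C A hole_filler] tnode_fill_outside[OF _ assms filler, of p C] by auto
    then show ?thesis unfolding ctx_nodes_def using False by blast
  qed
next
  have filler: "nonleaf hole_filler" by (simp add: hole_filler_def)
  fix n assume "n \<in> ctx_nodes C \<union> tnodes (\<lambda>q. LinkN (hpos C @ q)) A"
  then show "n \<in> tnodes LinkN (fill C A)"
  proof
    assume "n \<in> ctx_nodes C"
    then obtain p where p: "n = tnode LinkN (fill C hole_filler) p" "p \<in> pos (fill C hole_filler)"
      "\<not> (\<exists>r. p = hpos C @ r)" unfolding ctx_nodes_def by blast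
    then have "p \<in> pos (fill C A)" "n = tnode LinkN (fill C A) p"
      using pos_fill_outside[of p C A hole_filler] tnode_fill_outside[OF _ assms filler, of p C] by auto
    then show ?thesis unfolding tnodes_iff by blast
  next
    assume "n \<in> tnodes (\<lambda>q. LinkN (hpos C @ q)) A"
    then obtain r where "r \<in> pos A" "n = tnode (\<lambda>q. LinkN (hpos C @ q)) A r" unfolding tnodes_iff by blast
    then show ?thesis using pos_fill[of C r A] tnode_fill[of LinkN C A r] unfolding tnodes_iff by metis
  qed
qed

lemma sw_edges_fill:
  "nonleaf A \<Longrightarrow> sw_edges (fill C A) G s = outer_edges C G s \<union> tedges (\<lambda>q. LinkN (hpos C @ q)) A s"
  unfolding sw_edges_def outer_edges_def using tedges_fill[of A C s] by auto

lemma pg_nodes_fill: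
  "nonleaf A \<Longrightarrow> pg_nodes (fill C A) G = outer_nodes C G \<union> tnodes (\<lambda>q. LinkN (hpos C @ q)) A"
  unfolding pg_nodes_def outer_nodes_def using tnodes_fill[of A C] by auto

lemma ctx_nodes_below_hole: "LinkN (hpos C @ c # q) \<notin> ctx_nodes C"
proof
  assume "LinkN (hpos C @ c # q) \<in> ctx_nodes C"
  then obtain p where "LinkN (hpos C @ c # q) = tnode LinkN (fill C hole_filler) p" "\<not> (\<exists>r. p = hpos C @ r)"
    unfolding ctx_nodes_def by blast
  then show False using tnode_cases[of LinkN "fill C hole_filler" p] by auto
qed

lemma LinkN_notin_seq_tnodes: "LinkN g \<notin> tnodes (SeqN k) t"
  unfolding tnodes_def tnode_def by (auto split: tree.splits)

lemma outer_nodes_below_hole: "LinkN (hpos C @ c # q) \<notin> outer_nodes C G"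
  unfolding outer_nodes_def using ctx_nodes_below_hole LinkN_notin_seq_tnodes by blast

lemma outer_edges_below_hole:
  assumes "e \<in> outer_edges C G s"
  shows "LinkN (hpos C @ c # q) \<notin> e"
proof
  assume n: "LinkN (hpos C @ c # q) \<in> e"
  from assms show False unfolding outer_edges_def
  proof
    assume "e \<in> ctx_edges C s"
    then obtain p b where e: "e = {tnode LinkN (fill C hole_filler) p, tnode LinkN (fill C hole_filler) (p @ [b])}"
      "\<not> (\<exists>r. p = hpos C @ r)" unfolding ctx_edges_iff by blast
    have "p \<noteq> hpos C @ c # q" "p @ [b] \<noteq> hpos C @ c # q"
      using e(2) by (auto simp: append_eq_append_conv2 Cons_eq_append_conv)
    then show False using n e(1) tnode_cases[of LinkN "fill C hole_filler" p]
      tnode_cases[of LinkN "fill C hole_filler" "p @ [b]"] by auto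
  next
    assume "e \<in> (\<Union>k<length G. tedges (SeqN k) (G ! k) s)"
    then obtain k where "e \<subseteq> tnodes (SeqN k) (G ! k)" using tedges_subset_tnodes by blast
    then show False using n LinkN_notin_seq_tnodes by blast
  qed
qed

lemma outer_edges_cong:
  assumes "\<And>n. (\<forall>q. n \<noteq> LinkN (hpos C @ q)) \<Longrightarrow> s n = s' n"
  shows "outer_edges C G s = outer_edges C G s'"
proof -
  have "s (tnode LinkN (fill C hole_filler) p) = s' (tnode LinkN (fill C hole_filler) p)"
    if "\<not> (\<exists>r. p = hpos C @ r)" for p
  proof (cases "tnode LinkN (fill C hole_filler) p = LinkN p")
    case True
    then show ?thesis using assms that by simp
  next
    case False
    then show ?thesis using assms tnode_cases[of LinkN "fill C hole_filler" p] by force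
  qed
  then have "ctx_edges C s = ctx_edges C s'" unfolding ctx_edges_def by (intro Collect_cong) metis
  moreover have "tedges (SeqN k) (G ! k) s = tedges (SeqN k) (G ! k) s'" for k
    by (rule tedges_cong) (use assms in auto)
  ultimately show ?thesis unfolding outer_edges_def by simp
qed

lemma mset_leaves_fill:
  "mset (leaves t) = mset (leaves t') \<Longrightarrow> mset (leaves (fill C t)) = mset (leaves (fill C t'))"
  by (induction C) auto

lemma distinct_leaves_fill: "distinct (map snd (leaves (fill C t))) \<Longrightarrow> distinct (map snd (leaves t))"
  by (induction C) auto

lemma linking_TensE:
  assumes "linking (Tens a b)"
  obtains "nonleaf a" "linking a" "\<exists>i. b = Leaf (Bot, i)"
    | "nonleaf b" "linking b" "\<exists>i. a = Leaf (Bot, i)"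
    | "\<not> nonleaf a" "\<not> nonleaf b"
  using assms by (cases rule: linking.cases) auto

lemma linking_fill_inner: "linking (fill C t) \<Longrightarrow> nonleaf t \<Longrightarrow> linking t"
proof (induction C)
  case (CTensL c u)
  then show ?case by (metis fill.simps(2) fill_nonleaf linking_TensE nonleaf_simps(4))
next
  case (CTensR u c)
  then show ?case by (metis fill.simps(3) fill_nonleaf linking_TensE nonleaf_simps(4))
qed (auto elim: linking.cases)

lemma linking_fill_replace:
  "linking (fill C t) \<Longrightarrow> nonleaf t \<Longrightarrow> linking t' \<Longrightarrow> nonleaf t' \<Longrightarrow> linking (fill C t')"
proof (induction C)
  case (CTensL c u)
  then show ?case by (metis fill.simps(2) fill_nonleaf linking_TensE nonleaf_simps(4) l_botr)
next
  case (CTensR u c)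
  then show ?case by (metis fill.simps(3) fill_nonleaf linking_TensE nonleaf_simps(4) l_botl)
qed (auto elim: linking.cases intro: linking.intros)

section \<open>Paths, cycles and spanning trees\<close>

lemma adj_commute: "adj E u v = adj E v u"
  by (simp add: adj_def insert_commute)

lemma rtranclp_adj_sym: "(adj E)\<^sup>*\<^sup>* u v \<Longrightarrow> (adj E)\<^sup>*\<^sup>* v u"
proof (induction rule: rtranclp_induct)
  case (step y z)
  then show ?case by (metis adj_commute converse_rtranclp_into_rtranclp)
qed simp

lemma rtranclp_adj_mono: "E \<subseteq> E' \<Longrightarrow> (adj E)\<^sup>*\<^sup>* u v \<Longrightarrow> (adj E')\<^sup>*\<^sup>* u v"
  by (metis (no_types, lifting) adj_def mono_rtranclp subsetD)

lemma rtranclp_adj_edge: "{u, v} \<in> E \<Longrightarrow> (adj E)\<^sup>*\<^sup>* u v"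
  by (rule r_into_rtranclp) (simp add: adj_def)

lemma has_cycle_mono: "has_cycle E \<Longrightarrow> E \<subseteq> E' \<Longrightarrow> has_cycle E'"
  unfolding has_cycle_def by blast

lemma graph_connected_image:
  assumes "graph_connected V E"
  shows "graph_connected (F ` V) ((`) F ` E)"
proof -
  have "(adj ((`) F ` E))\<^sup>*\<^sup>* (F x) (F y)" if "(adj E)\<^sup>*\<^sup>* x y" for x y
    using that
  proof (induction rule: rtranclp_induct)
    case (step y z)
    have "F ` {y, z} \<in> (`) F ` E" using step(2) unfolding adj_def by (rule imageI)
    then have "adj ((`) F ` E) (F y) (F z)" by (simp add: adj_def)
    then show ?case using step(3) by simp
  qed simp
  then show ?thesis using assms unfolding graph_connected_def by blast
qed

lemma has_cycle_image:
  assumes "inj F" "has_cycle ((`) F ` E)"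
  shows "has_cycle E"
proof -
  obtain vs where vs: "length vs \<ge> 3" "distinct vs"
    "\<forall>i<length vs. {vs ! i, vs ! ((i + 1) mod length vs)} \<in> (`) F ` E"
    using assms(2) unfolding has_cycle_def by blast
  have in_range: "set vs \<subseteq> range F"
  proof
    fix x assume "x \<in> set vs"
    then obtain i where i: "i < length vs" "x = vs ! i" by (auto simp: in_set_conv_nth)
    then obtain e where "{vs ! i, vs ! ((i + 1) mod length vs)} = F ` e" using vs(3) by blast
    then show "x \<in> range F" using i(2) by (metis image_iff insertI1 rangeI)
  qed
  define ws where "ws = map (inv F) vs"
  have F_ws: "map F ws = vs" unfolding ws_def using in_range by (simp add: map_idI f_inv_into_f subsetD)
  have "length ws \<ge> 3" using vs(1) ws_def by simp
  moreover have "distinct ws" using vs(2) F_ws by (metis distinct_map)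
  moreover have "{ws ! i, ws ! ((i + 1) mod length ws)} \<in> E" if i: "i < length ws" for i
  proof -
    have j: "(i + 1) mod length ws < length ws" using i by (intro mod_less_divisor) linarith
    obtain e where "e \<in> E" "{vs ! i, vs ! ((i + 1) mod length vs)} = F ` e"
      using vs(3) i ws_def by auto
    moreover have "vs ! i = F (ws ! i)" "vs ! ((i + 1) mod length vs) = F (ws ! ((i + 1) mod length ws))"
      using i j F_ws by (metis length_map nth_map)+
    ultimately have "F ` {ws ! i, ws ! ((i + 1) mod length ws)} = F ` e" by simp
    then show ?thesis using \<open>e \<in> E\<close> by (simp only: inj_image_eq_iff[OF assms(1)])
  qed
  ultimately show ?thesis unfolding has_cycle_def by blast
qed

fun walk :: "node set set \<Rightarrow> node list \<Rightarrow> bool" where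
  "walk E [] = True"
| "walk E [x] = True"
| "walk E (x # y # r) = ({x, y} \<in> E \<and> walk E (y # r))"

lemma walk_nth: "walk E vs \<longleftrightarrow> (\<forall>i. Suc i < length vs \<longrightarrow> {vs ! i, vs ! Suc i} \<in> E)"
proof (induction E vs rule: walk.induct)
  case (3 E x y r)
  show ?case
  proof
    assume "walk E (x # y # r)"
    then show "\<forall>i. Suc i < length (x # y # r) \<longrightarrow> {(x # y # r) ! i, (x # y # r) ! Suc i} \<in> E"
      using 3 by (auto simp: nth_Cons split: nat.split)
  next
    assume a: "\<forall>i. Suc i < length (x # y # r) \<longrightarrow> {(x # y # r) ! i, (x # y # r) ! Suc i} \<in> E"
    have "{x, y} \<in> E" using a[rule_format, of 0] by simp
    moreover have "\<forall>i. Suc i < length (y # r) \<longrightarrow> {(y # r) ! i, (y # r) ! Suc i} \<in> E"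
      using a by (metis Suc_less_eq length_Cons nth_Cons_Suc)
    ultimately show "walk E (x # y # r)" using 3 by simp
  qed
qed auto

lemma walk_append:
  "walk E (xs @ ys) \<longleftrightarrow> walk E xs \<and> walk E ys \<and> (xs \<noteq> [] \<longrightarrow> ys \<noteq> [] \<longrightarrow> {last xs, hd ys} \<in> E)"
proof (induction E xs rule: walk.induct)
  case (2 E x) then show ?case by (cases ys) auto
qed auto

lemma walk_Cons: "walk E (x # xs) \<longleftrightarrow> walk E xs \<and> (xs \<noteq> [] \<longrightarrow> {x, hd xs} \<in> E)"
  by (cases xs) auto

lemma walk_rev: "walk E (rev xs) = walk E xs"
proof (induction E xs rule: walk.induct)
  case (3 E x y r)
  have "walk E (rev (x # y # r)) = walk E (rev (y # r) @ [x])" by simp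
  also have "\<dots> = (walk E (rev (y # r)) \<and> {y, x} \<in> E)" by (subst walk_append) simp
  also have "\<dots> = walk E (x # y # r)" using 3 by (auto simp: insert_commute)
  finally show ?case .
qed auto

lemma walk_mono: "walk E vs \<Longrightarrow> E \<subseteq> E' \<Longrightarrow> walk E' vs"
  by (induction E vs rule: walk.induct) auto

lemma walk_rtranclp_adj: "walk E vs \<Longrightarrow> vs \<noteq> [] \<Longrightarrow> (adj E)\<^sup>*\<^sup>* (hd vs) (last vs)"
proof (induction E vs rule: walk.induct)
  case (3 E x y r)
  have "adj E x y" using 3(2) by (simp add: adj_def)
  moreover have "(adj E)\<^sup>*\<^sup>* y (last (y # r))" using 3 by simp
  ultimately show ?case by (simp add: converse_rtranclp_into_rtranclp)
qed auto

lemma walk_within: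
  assumes "walk E vs" "vs \<noteq> []" "hd vs \<in> W" "\<And>e. e \<in> E \<Longrightarrow> e \<subseteq> W"
  shows "set vs \<subseteq> W"
  using assms by (induction E vs rule: walk.induct) auto

lemma rtranclp_adj_distinct_walk:
  assumes "(adj E)\<^sup>*\<^sup>* u v"
  shows "\<exists>vs. walk E vs \<and> distinct vs \<and> vs \<noteq> [] \<and> hd vs = u \<and> last vs = v"
  using assms
proof (induction rule: converse_rtranclp_induct)
  case base
  show ?case by (rule exI[of _ "[v]"]) simp
next
  case (step u y)
  obtain vs where vs: "walk E vs" "distinct vs" "vs \<noteq> []" "hd vs = y" "last vs = v"
    using step(3) by blast
  show ?case
  proof (cases "u \<in> set vs")
    case True
    then obtain xs ys where xy: "vs = xs @ u # ys" by (metis split_list)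
    then show ?thesis using vs walk_append[of E xs "u # ys"] by (intro exI[of _ "u # ys"]) auto
  next
    case False
    then show ?thesis using vs step(1) walk_Cons[of E u vs]
      by (intro exI[of _ "u # vs"]) (auto simp: adj_def)
  qed
qed

lemma has_cycle_closed_walk:
  assumes "walk E vs" "distinct vs" "length vs \<ge> 3" "{last vs, hd vs} \<in> E"
  shows "has_cycle E"
  unfolding has_cycle_def
proof (intro exI[of _ vs] conjI allI impI)
  fix i assume i: "i < length vs"
  show "{vs ! i, vs ! ((i + 1) mod length vs)} \<in> E"
  proof (cases "Suc i < length vs")
    case True
    then show ?thesis using assms(1) walk_nth by simp
  next
    case False
    then have "i = length vs - 1" using i by simp
    moreover have "vs \<noteq> []" using assms(3) by auto
    ultimately show ?thesis
      using assms(4) by (simp add: last_conv_nth hd_conv_nth insert_commute)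
  qed
qed (use assms in auto)

lemma has_cycle_join_walks:
  assumes "walk E D" "walk E L" "distinct D" "distinct L" "set D \<inter> set L = {}" "D \<noteq> []" "L \<noteq> []"
    "{last D, last L} \<in> E" "{hd L, hd D} \<in> E" "length D + length L \<ge> 3"
  shows "has_cycle E"
proof (rule has_cycle_closed_walk)
  show "walk E (D @ rev L)"
    unfolding walk_append walk_rev using assms(1,2,7,8) by (simp add: hd_rev)
  show "{last (D @ rev L), hd (D @ rev L)} \<in> E"
    using assms(6,7,9) by (simp add: last_rev)
qed (use assms(3-5,10) in auto)

lemma walk_rotate_cycle:
  assumes vs: "distinct vs" "length vs \<ge> 3"
    "\<forall>i<length vs. {vs ! i, vs ! ((i + 1) mod length vs)} \<in> insert {u, v} E"
    and i: "i < length vs" "{vs ! i, vs ! ((i + 1) mod length vs)} = {u, v}"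
  shows "walk E (rotate (Suc i) vs)" "{last (rotate (Suc i) vs), hd (rotate (Suc i) vs)} = {u, v}"
proof -
  define n where "n = length vs"
  define ws where "ws = rotate (Suc i) vs"
  have lw: "length ws = n" and dw: "distinct ws" and n3: "n \<ge> 3" and i_n: "i < n"
    using vs(1,2) i(1) unfolding ws_def n_def by simp_all
  have ws_nth: "ws ! j = vs ! ((j + Suc i) mod n)" if "j < n" for j
    using that nth_rotate[of j vs "Suc i"] unfolding ws_def n_def by (simp add: add.commute)
  have ends: "{ws ! (n - 1), ws ! 0} = {u, v}"
  proof -
    have "(n - 1 + Suc i) mod n = i" using i_n n3 by (simp add: mod_if)
    then have "ws ! (n - 1) = vs ! i" using ws_nth[of "n - 1"] n3 by simp
    moreover have "ws ! 0 = vs ! ((i + 1) mod n)" using ws_nth[of 0] n3 by simp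
    ultimately show ?thesis using i(2) unfolding n_def by simp
  qed
  moreover have "ws \<noteq> []" using lw n3 by auto
  ultimately show "{last ws, hd ws} = {u, v}" using lw by (simp add: hd_conv_nth last_conv_nth)
  have "{ws ! j, ws ! Suc j} \<in> E" if j: "Suc j < n" for j
  proof -
    define k where "k = (j + Suc i) mod n"
    have "k < n" "ws ! j = vs ! k" using n3 j ws_nth[of j] unfolding k_def by simp_all
    moreover have "ws ! Suc j = vs ! ((k + 1) mod n)"
      using ws_nth[of "Suc j"] j unfolding k_def by (simp add: mod_Suc_eq)
    ultimately have "{ws ! j, ws ! Suc j} \<in> insert {u, v} E" using vs(3) n_def by simp
    moreover have "{ws ! j, ws ! Suc j} \<noteq> {ws ! (n - 1), ws ! 0}"
      using dw lw j n3 by (auto simp: doubleton_eq_iff nth_eq_iff_index_eq)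
    ultimately show ?thesis using ends by simp
  qed
  then show "walk E ws" unfolding walk_nth lw by blast
qed

lemma has_cycle_insert:
  assumes "has_cycle (insert {u, v} E)"
  shows "has_cycle E \<or> (adj E)\<^sup>*\<^sup>* u v"
proof -
  obtain vs where vs: "length vs \<ge> 3" "distinct vs"
    "\<forall>i<length vs. {vs ! i, vs ! ((i + 1) mod length vs)} \<in> insert {u, v} E"
    using assms unfolding has_cycle_def by blast
  show ?thesis
  proof (cases "\<forall>i<length vs. {vs ! i, vs ! ((i + 1) mod length vs)} \<in> E")
    case True
    then show ?thesis unfolding has_cycle_def using vs(1,2) by blast
  next
    case False
    then obtain i where i: "i < length vs" "{vs ! i, vs ! ((i + 1) mod length vs)} = {u, v}"
      using vs(3) by blast
    note rotated = walk_rotate_cycle[OF vs(2,1,3) i]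
    have "rotate (Suc i) vs \<noteq> []" using vs(1) by auto
    then have "(adj E)\<^sup>*\<^sup>* (hd (rotate (Suc i) vs)) (last (rotate (Suc i) vs))"
      using walk_rtranclp_adj[OF rotated(1)] by blast
    then show ?thesis using rotated(2) rtranclp_adj_sym by (metis doubleton_eq_iff)
  qed
qed

lemma acyclic_remove_edge_disconnects:
  assumes "graph_acyclic E" "{x, y} \<in> E" "x \<noteq> y"
  shows "\<not> (adj (E - {{x, y}}))\<^sup>*\<^sup>* x y"
proof
  assume "(adj (E - {{x, y}}))\<^sup>*\<^sup>* x y"
  then obtain vs where vs: "walk (E - {{x, y}}) vs" "distinct vs" "vs \<noteq> []" "hd vs = x" "last vs = y"
    using rtranclp_adj_distinct_walk by blast
  obtain a b rest where abr: "vs = a # b # rest"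
    using vs(3,4,5) assms(3) by (metis last_ConsL list.exhaust_sel)
  show False
  proof (cases rest)
    case Nil
    then show False using vs(1,4,5) abr by simp
  next
    case (Cons c r)
    have "walk E vs" using vs(1) walk_mono by blast
    moreover have "length vs \<ge> 3" using abr Cons by simp
    moreover have "{last vs, hd vs} \<in> E" using vs(4,5) assms(2) by (simp add: insert_commute)
    ultimately have "has_cycle E" using vs(2) has_cycle_closed_walk by blast
    then show False using assms(1) unfolding graph_acyclic_def by blast
  qed
qed

lemma remove_edge_components:
  assumes "graph_connected V E" "x \<in> V" "w \<in> V" "{x, y} \<in> E"
  shows "(adj (E - {{x, y}}))\<^sup>*\<^sup>* x w \<or> (adj (E - {{x, y}}))\<^sup>*\<^sup>* y w"
proof -
  have "(adj E)\<^sup>*\<^sup>* x w" using assms unfolding graph_connected_def by blast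
  then show ?thesis
  proof (induction rule: rtranclp_induct)
    case (step a b)
    show ?case
    proof (cases "{a, b} = {x, y}")
      case True
      then show ?thesis by (metis doubleton_eq_iff rtranclp.rtrancl_refl)
    next
      case False
      then have "adj (E - {{x, y}}) a b" using step(2) by (simp add: adj_def)
      then show ?thesis using step(3) by (meson rtranclp.rtrancl_into_rtrancl)
    qed
  qed simp
qed

definition spanning_tree :: "node set \<Rightarrow> node set set \<Rightarrow> bool" where
  "spanning_tree V E \<longleftrightarrow> graph_connected V E \<and> graph_acyclic E"

lemma spanning_tree_exchange:
  assumes "spanning_tree V E" "{x, y} \<in> E" "x \<noteq> y" "x \<in> V"
    "(adj (E - {{x, y}}))\<^sup>*\<^sup>* x u" "(adj (E - {{x, y}}))\<^sup>*\<^sup>* y v"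
  shows "spanning_tree V (insert {u, v} (E - {{x, y}}))"
proof -
  let ?H = "E - {{x, y}}" and ?E' = "insert {u, v} (E - {{x, y}})"
  have H_sub: "?H \<subseteq> ?E'" by blast
  have xy: "(adj ?E')\<^sup>*\<^sup>* x y"
  proof -
    have "(adj ?E')\<^sup>*\<^sup>* x u" using rtranclp_adj_mono[OF H_sub assms(5)] .
    moreover have "(adj ?E')\<^sup>*\<^sup>* u v" by (rule rtranclp_adj_edge) simp
    moreover have "(adj ?E')\<^sup>*\<^sup>* v y" using rtranclp_adj_sym[OF rtranclp_adj_mono[OF H_sub assms(6)]] .
    ultimately show ?thesis by (meson rtranclp_trans)
  qed
  have x_reaches: "(adj ?E')\<^sup>*\<^sup>* x w" if "w \<in> V" for w
    using remove_edge_components[of V E x w y] assms(1,2,4) that xy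
      rtranclp_adj_mono[OF H_sub] unfolding spanning_tree_def by (meson rtranclp_trans)
  have "graph_connected V ?E'"
    unfolding graph_connected_def using x_reaches rtranclp_adj_sym by (meson rtranclp_trans)
  moreover have "graph_acyclic ?E'"
  proof -
    have acyclic: "graph_acyclic E" using assms(1) spanning_tree_def by blast
    then have "\<not> has_cycle ?H" using has_cycle_mono[of ?H E] unfolding graph_acyclic_def by blast
    moreover have "\<not> (adj ?H)\<^sup>*\<^sup>* u v"
    proof
      assume "(adj ?H)\<^sup>*\<^sup>* u v"
      then have "(adj ?H)\<^sup>*\<^sup>* x y" using assms(5) rtranclp_adj_sym[OF assms(6)] by (meson rtranclp_trans)
      then show False using acyclic_remove_edge_disconnects[OF acyclic assms(2,3)] by blast
    qed
    ultimately show ?thesis unfolding graph_acyclic_def using has_cycle_insert by blast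
  qed
  ultimately show ?thesis unfolding spanning_tree_def by blast
qed

lemma first_exit:
  assumes "(adj E)\<^sup>*\<^sup>* z n" "z \<in> W" "n \<notin> W"
  obtains w m where "(adj {e \<in> E. e \<subseteq> W})\<^sup>*\<^sup>* z w" "w \<in> W" "m \<notin> W" "{w, m} \<in> E"
proof -
  have "(y \<in> W \<and> (adj {e \<in> E. e \<subseteq> W})\<^sup>*\<^sup>* z y) \<or>
        (\<exists>w m. (adj {e \<in> E. e \<subseteq> W})\<^sup>*\<^sup>* z w \<and> w \<in> W \<and> m \<notin> W \<and> {w, m} \<in> E)"
    if "(adj E)\<^sup>*\<^sup>* z y" for y
    using that
  proof (induction rule: rtranclp_induct)
    case (step y y')
    have e: "{y, y'} \<in> E" using step(2) by (simp add: adj_def)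
    from step(3) show ?case
    proof
      assume a: "y \<in> W \<and> (adj {e \<in> E. e \<subseteq> W})\<^sup>*\<^sup>* z y"
      show ?case
      proof (cases "y' \<in> W")
        case True
        then have "adj {e \<in> E. e \<subseteq> W} y y'" using e a by (simp add: adj_def)
        then show ?thesis using a True by (meson rtranclp.rtrancl_into_rtrancl)
      qed (use a e in blast)
    qed blast
  qed (use assms(2) in simp)
  then show ?thesis using assms that by blast
qed

lemma rtranclp_adj_isolated: "(adj E)\<^sup>*\<^sup>* b w \<Longrightarrow> \<forall>e\<in>E. b \<notin> e \<Longrightarrow> w = b"
proof (induction rule: rtranclp_induct)
  case (step y w')
  then show ?case by (auto simp: adj_def)
qed simp

lemma rtranclp_adj_two_edges:
  assumes "(adj (E \<union> {{a, b}, {a, z}}))\<^sup>*\<^sup>* b w"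
  shows "(adj E)\<^sup>*\<^sup>* a w \<or> (adj E)\<^sup>*\<^sup>* b w \<or> (adj E)\<^sup>*\<^sup>* z w"
  using assms
proof (induction rule: rtranclp_induct)
  case (step y w')
  have "{y, w'} \<in> E \<or> {y, w'} = {a, b} \<or> {y, w'} = {a, z}" using step(2) by (auto simp: adj_def)
  then show ?case
  proof (elim disjE)
    assume "{y, w'} \<in> E"
    then have "adj E y w'" by (simp add: adj_def)
    then show ?case using step(3) by (meson rtranclp.rtrancl_into_rtrancl)
  qed (auto simp: doubleton_eq_iff)
qed simp

lemma spanning_tree_move_leaf:
  assumes T: "spanning_tree V (E \<union> {{a, b}, {b, r}, {b, z}})"
    and b_isolated: "\<forall>e\<in>E. b \<notin> e" and dist: "a \<noteq> z" "b \<noteq> z" "r \<noteq> z" and "b \<in> V"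
  shows "spanning_tree V (E \<union> {{a, b}, {a, z}, {b, r}})"
proof -
  let ?G = "E \<union> {{a, b}, {b, r}, {b, z}}"
  have "{b, z} \<notin> E" "{b, z} \<noteq> {a, b}" "{b, z} \<noteq> {b, r}"
    using b_isolated dist by (auto simp: doubleton_eq_iff)
  then have G_minus: "?G - {{b, z}} = E \<union> {{a, b}, {b, r}}" by auto
  have "(adj (?G - {{b, z}}))\<^sup>*\<^sup>* b a"
    unfolding G_minus by (rule rtranclp_adj_edge) (simp add: insert_commute)
  then have "spanning_tree V (insert {a, z} (?G - {{b, z}}))"
    by (intro spanning_tree_exchange[OF T _ dist(2) \<open>b \<in> V\<close>]) simp_all
  moreover have "insert {a, z} (?G - {{b, z}}) = E \<union> {{a, b}, {a, z}, {b, r}}" unfolding G_minus by auto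
  ultimately show ?thesis by simp
qed

lemma spanning_tree_replace_child:
  assumes T: "spanning_tree V (E \<union> {{a, b}, {a, z}, {b, r}})"
    and acyclic: "graph_acyclic (E \<union> {{a, q}, {b, r}, {b, z}})"
    and q_z: "\<not> (adj (E \<union> {{a, q}, {b, r}}))\<^sup>*\<^sup>* q z"
    and b_isolated: "\<forall>e\<in>E. b \<notin> e" and aq: "{a, q} \<notin> E"
    and dist: "a \<noteq> b" "a \<noteq> q" "a \<noteq> r" "b \<noteq> q" "b \<noteq> r" and V: "b \<in> V" "q \<in> V"
  shows "spanning_tree V (E \<union> {{a, b}, {a, z}, {b, q}})"
proof -
  let ?G = "E \<union> {{a, b}, {a, z}, {b, r}}"
  have "{b, r} \<notin> E" "{b, r} \<noteq> {a, b}" "{b, r} \<noteq> {a, z}"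
    using b_isolated dist by (auto simp: doubleton_eq_iff)
  then have G_minus: "?G - {{b, r}} = E \<union> {{a, b}, {a, z}}" by auto
  have "\<not> (adj (?G - {{b, r}}))\<^sup>*\<^sup>* b q"
  proof
    assume "(adj (?G - {{b, r}}))\<^sup>*\<^sup>* b q"
    then consider "(adj E)\<^sup>*\<^sup>* a q" | "(adj E)\<^sup>*\<^sup>* b q" | "(adj E)\<^sup>*\<^sup>* z q"
      unfolding G_minus using rtranclp_adj_two_edges by blast
    then show False
    proof cases
      case 1
      have "E \<subseteq> (E \<union> {{a, q}, {b, r}, {b, z}}) - {{a, q}}" using aq by blast
      then have "(adj ((E \<union> {{a, q}, {b, r}, {b, z}}) - {{a, q}}))\<^sup>*\<^sup>* a q"
        using 1 rtranclp_adj_mono by blast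
      then show False using acyclic_remove_edge_disconnects[OF acyclic] dist(2) by blast
    next
      case 2
      then show False using rtranclp_adj_isolated b_isolated dist(4) by blast
    next
      case 3
      then show False using q_z rtranclp_adj_sym rtranclp_adj_mono[of E] by blast
    qed
  qed
  then have "(adj (?G - {{b, r}}))\<^sup>*\<^sup>* r q"
    using remove_edge_components[of V ?G b q r] T V unfolding spanning_tree_def by blast
  then have "spanning_tree V (insert {b, q} (?G - {{b, r}}))"
    by (intro spanning_tree_exchange[OF T _ dist(5) V(1)]) simp_all
  moreover have "insert {b, q} (?G - {{b, r}}) = E \<union> {{a, b}, {a, z}, {b, q}}" unfolding G_minus by auto
  ultimately show ?thesis by simp
qed

section \<open>Relabelling nodes and commutativity steps\<close>

definition relabel_below :: "bool list \<Rightarrow> (bool list \<Rightarrow> bool list) \<Rightarrow> node \<Rightarrow> node" where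
  "relabel_below h f n =
     (case n of LinkN g \<Rightarrow> if \<exists>r. g = h @ r then LinkN (h @ f (drop (length h) g)) else n | _ \<Rightarrow> n)"

lemma relabel_below_simps [simp]:
  "relabel_below h f (LinkN (h @ r)) = LinkN (h @ f r)"
  "relabel_below h f (LeafN l) = LeafN l"
  "relabel_below h f (SeqN k p) = SeqN k p"
  unfolding relabel_below_def by auto

lemma relabel_below_outside:
  "f [] = [] \<Longrightarrow> (\<And>c q. n \<noteq> LinkN (h @ c # q)) \<Longrightarrow> relabel_below h f n = n"
  unfolding relabel_below_def by (cases n) (auto, metis list.exhaust)

lemma inj_relabel_below: "inj f \<Longrightarrow> inj (relabel_below h f)"
  unfolding inj_def relabel_below_def by (auto split: node.splits if_splits)

lemma relabel_below_root: "f [] = [] \<Longrightarrow> relabel_below h f (LinkN h) = LinkN h"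
  using relabel_below_simps(1)[of h f "[]"] by simp

lemma relabel_below_subtree:
  "(\<And>q. f (p @ q) = p' @ q) \<Longrightarrow> (\<lambda>q. relabel_below h f (LinkN (h @ p @ q))) = (\<lambda>q. LinkN (h @ p' @ q))"
  by simp

lemma tnode_relabel_below:
  "(\<And>q. f (p @ q) = p' @ q) \<Longrightarrow>
   relabel_below h f (tnode (\<lambda>q. LinkN (h @ p @ q)) t r) = tnode (\<lambda>q. LinkN (h @ p' @ q)) t r"
  using tnode_relabel[of "relabel_below h f" "\<lambda>q. LinkN (h @ p @ q)" t r] relabel_below_subtree by simp

lemma tnodes_relabel_below:
  "(\<And>q. f (p @ q) = p' @ q) \<Longrightarrow>
   relabel_below h f ` tnodes (\<lambda>q. LinkN (h @ p @ q)) t = tnodes (\<lambda>q. LinkN (h @ p' @ q)) t"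
  using tnodes_relabel[of "relabel_below h f" "\<lambda>q. LinkN (h @ p @ q)" t] relabel_below_subtree by simp

lemma tedges_relabel_below:
  assumes "\<And>q. f (p @ q) = p' @ q" "\<And>q. s' (LinkN (h @ p @ q)) = s (LinkN (h @ p' @ q))"
  shows "(`) (relabel_below h f) ` tedges (\<lambda>q. LinkN (h @ p @ q)) t s' = tedges (\<lambda>q. LinkN (h @ p' @ q)) t s"
proof -
  have "tedges (\<lambda>q. LinkN (h @ p @ q)) t s' = tedges (\<lambda>q. LinkN (h @ p @ q)) t (\<lambda>n. s (relabel_below h f n))"
    by (rule tedges_cong) (simp add: assms)
  then show ?thesis
    using tedges_relabel[of "relabel_below h f" "\<lambda>q. LinkN (h @ p @ q)" t s] relabel_below_subtree[OF assms(1)]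
    by simp
qed

lemma relabel_below_outer_nodes:
  "f [] = [] \<Longrightarrow> relabel_below (hpos C) f ` outer_nodes C G = outer_nodes C G"
  using outer_nodes_below_hole relabel_below_outside by (metis image_cong image_ident)

lemma relabel_below_outer_edges:
  assumes "f [] = []" "\<And>n. \<forall>q. n \<noteq> LinkN (hpos C @ q) \<Longrightarrow> s' n = s n"
  shows "(`) (relabel_below (hpos C) f) ` outer_edges C G s' = outer_edges C G s"
proof -
  have "relabel_below (hpos C) f ` e = e" if "e \<in> outer_edges C G s" for e
  proof -
    have "relabel_below (hpos C) f n = n" if "n \<in> e" for n
      using outer_edges_below_hole[OF \<open>e \<in> _\<close>] that assms(1) by (intro relabel_below_outside) auto
    then show ?thesis by simp
  qed
  moreover have "outer_edges C G s' = outer_edges C G s" by (rule outer_edges_cong) (use assms(2) in auto)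
  ultimately show ?thesis by simp
qed

lemma proof_graph_spanning_tree: "proof_graph P G \<Longrightarrow> spanning_tree (pg_nodes P G) (sw_edges P G s)"
  unfolding proof_graph_def spanning_tree_def by blast

lemma proof_graph_relabel:
  assumes "proof_graph P G" "linking P'" "mset (leaves P') = mset (leaves P)" "inj F"
    and nodes: "pg_nodes P' G = F ` pg_nodes P G"
    and edges: "\<And>s. \<exists>E. spanning_tree (pg_nodes P G) E \<and> sw_edges P' G s = (`) F ` E"
  shows "proof_graph P' G"
proof -
  have "mset (map snd (leaves P')) = mset (map snd (leaves P))" using assms(3) by (metis mset_map)
  then have "distinct (map snd (leaves P'))"
    using assms(1) mset_eq_imp_distinct_iff unfolding proof_graph_def by blast
  moreover have "graph_connected (pg_nodes P' G) (sw_edges P' G s) \<and> graph_acyclic (sw_edges P' G s)" for s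
  proof -
    obtain E where E: "spanning_tree (pg_nodes P G) E" "sw_edges P' G s = (`) F ` E" using edges by blast
    then have "graph_connected (F ` pg_nodes P G) ((`) F ` E)"
      unfolding spanning_tree_def by (intro graph_connected_image) simp
    moreover have "\<not> has_cycle ((`) F ` E)"
      using E(1) has_cycle_image[OF assms(4)] unfolding spanning_tree_def graph_acyclic_def by blast
    ultimately show ?thesis unfolding nodes E(2) graph_acyclic_def by blast
  qed
  ultimately show ?thesis using assms(1-3) unfolding proof_graph_def by simp
qed

fun swap_children :: "'l tree \<Rightarrow> 'l tree" where
  "swap_children (Tens a b) = Tens b a"
| "swap_children (Par a b) = Par b a"
| "swap_children (Cut a b) = Cut b a"
| "swap_children (Leaf l) = Leaf l"

fun negate_head :: "bool list \<Rightarrow> bool list" where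
  "negate_head [] = []"
| "negate_head (c # q) = (\<not> c) # q"

lemma inj_negate_head: "inj negate_head"
proof (rule injI)
  fix p q :: "bool list" assume "negate_head p = negate_head q"
  then show "p = q" by (cases p; cases q) auto
qed

lemma bool_comprehension:
  "{f b | b. \<not> (P \<and> v = b)} = (if P then {f (\<not> v)} else {f False, f True})"
  by (cases v) (auto, (metis (full_types))+)

text \<open>Swapping the children of the node at the hole mirrors the positions below it; a par node
  there is compensated by negating the switching at the hole.\<close>

lemma sw_edges_swap_children:
  fixes C :: "leaf ctx"
  assumes XY: "binary T X Y" "binary (swap_children T) Y X"
    and par: "is_par_at (swap_children T) [] = is_par_at T []"
  defines "F \<equiv> relabel_below (hpos C) negate_head"
  shows "sw_edges (fill C (swap_children T)) G s =
    (`) F ` sw_edges (fill C T) G (\<lambda>n. if n = LinkN (hpos C) then \<not> s n else s (F n))"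
proof -
  define h where "h = hpos C"
  define s0 where "s0 = (\<lambda>n. if n = LinkN h then \<not> s n else s (F n))"
  have T: "nonleaf T" "nonleaf (swap_children T)" using XY unfolding binary_def by auto
  have F_h: "F (LinkN h) = LinkN h" unfolding F_def h_def by (simp add: relabel_below_root)
  have outer: "(`) F ` outer_edges C G s0 = outer_edges C G s"
    unfolding F_def by (rule relabel_below_outer_edges) (auto simp: s0_def h_def F_def relabel_below_outside)
  have child: "(`) F ` tedges (\<lambda>q. LinkN (h @ [b] @ q)) Z s0 = tedges (\<lambda>q. LinkN (h @ [\<not> b] @ q)) Z s" for b Z
    unfolding F_def h_def by (rule tedges_relabel_below) (simp_all add: s0_def F_def h_def)
  have child_root: "F (tnode (\<lambda>q. LinkN (h @ [b] @ q)) Z []) = tnode (\<lambda>q. LinkN (h @ [\<not> b] @ q)) Z []" for b Z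
    unfolding F_def h_def by (rule tnode_relabel_below) simp
  have root: "(`) F ` {{LinkN h, tnode (\<lambda>q. LinkN (h @ b # q)) (if b then Y else X) []} | b.
        \<not> (is_par_at T [] \<and> s0 (LinkN h) = b)}
      = {{LinkN h, tnode (\<lambda>q. LinkN (h @ b # q)) (if b then X else Y) []} | b.
        \<not> (is_par_at (swap_children T) [] \<and> s (LinkN h) = b)}"
    unfolding bool_comprehension using par F_h child_root by (auto simp: s0_def)
  have "sw_edges (fill C (swap_children T)) G s = outer_edges C G s \<union>
      ({{LinkN h, tnode (\<lambda>q. LinkN (h @ b # q)) (if b then X else Y) []} | b.
        \<not> (is_par_at (swap_children T) [] \<and> s (LinkN h) = b)}
      \<union> tedges (\<lambda>q. LinkN (h @ False # q)) Y s \<union> tedges (\<lambda>q. LinkN (h @ True # q)) X s)"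
    using sw_edges_fill[OF T(2)] tedges_binary[OF XY(2), of "\<lambda>q. LinkN (h @ q)"] h_def by simp
  also have "\<dots> = (`) F ` (outer_edges C G s0 \<union>
      ({{LinkN h, tnode (\<lambda>q. LinkN (h @ b # q)) (if b then Y else X) []} | b.
        \<not> (is_par_at T [] \<and> s0 (LinkN h) = b)}
      \<union> tedges (\<lambda>q. LinkN (h @ False # q)) X s0 \<union> tedges (\<lambda>q. LinkN (h @ True # q)) Y s0))"
    unfolding image_Un outer root using child[of False] child[of True] by auto
  also have "\<dots> = (`) F ` sw_edges (fill C T) G s0"
    using sw_edges_fill[OF T(1)] tedges_binary[OF XY(1), of "\<lambda>q. LinkN (h @ q)"] h_def by simp
  finally show ?thesis unfolding s0_def h_def .
qed

lemma pg_nodes_swap_children: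
  assumes XY: "binary T X Y" "binary (swap_children T) Y X"
  shows "pg_nodes (fill C (swap_children T)) G = relabel_below (hpos C) negate_head ` pg_nodes (fill C T) G"
proof -
  have T: "nonleaf T" "nonleaf (swap_children T)" using XY unfolding binary_def by auto
  have "relabel_below (hpos C) negate_head ` tnodes (\<lambda>q. LinkN (hpos C @ [b] @ q)) Z
      = tnodes (\<lambda>q. LinkN (hpos C @ [\<not> b] @ q)) Z" for b Z
    by (rule tnodes_relabel_below) simp
  then show ?thesis
    unfolding pg_nodes_fill[OF T(1)] pg_nodes_fill[OF T(2)] tnodes_binary[OF XY(1)] tnodes_binary[OF XY(2)]
    using relabel_below_outer_nodes[of negate_head C G] relabel_below_root[of negate_head "hpos C"]
    by (auto simp: image_Un)
qed

lemma proof_graph_swap_children: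
  assumes pg: "proof_graph (fill C T) G" and T: "nonleaf T" and lk: "linking (swap_children T)"
  shows "proof_graph (fill C (swap_children T)) G"
proof (rule proof_graph_relabel[OF pg _ _ inj_relabel_below[OF inj_negate_head]])
  obtain X Y where XY: "binary T X Y" "binary (swap_children T) Y X"
    and par: "is_par_at (swap_children T) [] = is_par_at T []"
    using T by (cases T) (auto simp: binary_def)
  have "linking (fill C T)" using pg unfolding proof_graph_def by blast
  then show "linking (fill C (swap_children T))"
    using linking_fill_replace T lk by (cases T) auto
  show "mset (leaves (fill C (swap_children T))) = mset (leaves (fill C T))"
    using T by (intro mset_leaves_fill) (cases T; simp)
  show "pg_nodes (fill C (swap_children T)) G = relabel_below (hpos C) negate_head ` pg_nodes (fill C T) G"
    using pg_nodes_swap_children[OF XY] .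
  show "\<exists>E. spanning_tree (pg_nodes (fill C T) G) E \<and>
      sw_edges (fill C (swap_children T)) G s = (`) (relabel_below (hpos C) negate_head) ` E" for s
    using sw_edges_swap_children[OF XY par] proof_graph_spanning_tree[OF pg] by blast
qed

lemma pg_step_Tens_commute:
  assumes "proof_graph (fill C (Tens X Y)) G"
  shows "pg_step G (fill C (Tens X Y)) (fill C (Tens Y X))"
proof -
  have "linking (Tens X Y)"
    using assms linking_fill_inner unfolding proof_graph_def by fastforce
  then have "linking (swap_children (Tens X Y))"
    by (cases rule: linking.cases) (auto intro: linking.intros)
  then have "proof_graph (fill C (Tens Y X)) G"
    using proof_graph_swap_children[OF assms] by simp
  then show ?thesis using assms unfolding pg_step_def local_rule_def by blast
qed

lemma pg_step_Par_commute:
  assumes "proof_graph (fill C (Par X Y)) G"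
  shows "pg_step G (fill C (Par X Y)) (fill C (Par Y X))"
proof -
  have "linking (Par X Y)"
    using assms linking_fill_inner unfolding proof_graph_def by fastforce
  then have "linking (swap_children (Par X Y))"
    by (cases rule: linking.cases) (auto intro: linking.intros)
  then have "proof_graph (fill C (Par Y X)) G"
    using proof_graph_swap_children[OF assms] by simp
  then show ?thesis using assms unfolding pg_step_def local_rule_def by blast
qed

lemma pg_step_equiv: "pg_step G P P' \<Longrightarrow> pg_equiv G P P'"
  unfolding pg_equiv_def by (metis (mono_tags, lifting) pg_step_def r_into_rtranclp)

lemma pg_equiv_step:
  assumes "pg_step G P P'" "pg_equiv G P' P''"
  shows "pg_equiv G P P''"
proof -
  have "proof_graph P G" using assms(1) unfolding pg_step_def by blast
  moreover have "(\<lambda>X Y. pg_step G X Y \<or> pg_step G Y X)\<^sup>*\<^sup>* P P''"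
    using assms unfolding pg_equiv_def by (blast intro: converse_rtranclp_into_rtranclp)
  ultimately show ?thesis unfolding pg_equiv_def by blast
qed

fun ctx_comp :: "'l ctx \<Rightarrow> 'l ctx \<Rightarrow> 'l ctx" where
  "ctx_comp Hole D = D"
| "ctx_comp (CTensL c u) D = CTensL (ctx_comp c D) u"
| "ctx_comp (CTensR u c) D = CTensR u (ctx_comp c D)"
| "ctx_comp (CParL c u) D = CParL (ctx_comp c D) u"
| "ctx_comp (CParR u c) D = CParR u (ctx_comp c D)"

lemma fill_ctx_comp: "fill (ctx_comp C D) t = fill C (fill D t)"
  by (induction C) auto

section \<open>The side condition at a cut redex\<close>

locale cut_redex =
  fixes C R :: "leaf ctx" and Q :: "leaf tree" and \<Gamma> :: "leaf tree list" and x :: lit and i j k :: nat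
  assumes proof_graph_lhs: "proof_graph
     (fill C (Par (Tens (Leaf (dlit x, j)) Q) (Tens (fill R (Leaf (x, i))) (Leaf (Bot, k)))))
     (Cut (Leaf (x, i)) (Leaf (dlit x, j)) # \<Gamma>)"
begin

abbreviation "Q' \<equiv> Tens (Leaf (dlit x, j)) Q"
abbreviation "R' \<equiv> fill R (Leaf (x, i))"
abbreviation "lhs \<equiv> Par Q' (Tens R' (Leaf (Bot, k)))"
abbreviation "rhs \<equiv> Tens (Par Q' R') (Leaf (Bot, k))"
abbreviation "G \<equiv> Cut (Leaf (x, i)) (Leaf (dlit x, j)) # \<Gamma>"
abbreviation "h \<equiv> hpos C"

abbreviation "mkQ \<equiv> \<lambda>q. LinkN (h @ False # q)"
abbreviation "mkR \<equiv> \<lambda>q. LinkN (h @ True # False # q)"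
abbreviation "par_node \<equiv> LinkN h"
abbreviation "tens_node \<equiv> LinkN (h @ [True])"
abbreviation "Q_root \<equiv> LinkN (h @ [False])"
abbreviation "R_root \<equiv> tnode mkR R' []"
abbreviation "bot_node \<equiv> LeafN k"
abbreviation "cut_node \<equiv> SeqN 0 []"

lemma redex_edges:
  "tedges (\<lambda>q. LinkN (h @ q)) lhs s =
     (if s par_node then {{par_node, Q_root}} else {{par_node, tens_node}})
      \<union> {{tens_node, R_root}, {tens_node, bot_node}} \<union> tedges mkQ Q' s \<union> tedges mkR R' s"
  by (simp add: tedges_Par tedges_Tens[of _ R'] tedges_Leaf Un_ac)

lemma sw_edges_lhs:
  "sw_edges (fill C lhs) G s = outer_edges C G s \<union> tedges (\<lambda>q. LinkN (h @ q)) lhs s"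
  by (rule sw_edges_fill) simp

lemma pg_nodes_lhs:
  "pg_nodes (fill C lhs) G = outer_nodes C G \<union>
     ({par_node, tens_node, bot_node} \<union> tnodes mkQ Q' \<union> tnodes mkR R')"
  unfolding pg_nodes_fill[of lhs, simplified] by (auto simp: tnodes_simps)

lemma bot_node_notin_Q_R: "bot_node \<notin> tnodes mkQ Q'" "bot_node \<notin> tnodes mkR R'"
proof -
  have "distinct (map snd (leaves lhs))"
    using proof_graph_lhs distinct_leaves_fill unfolding proof_graph_def by blast
  then have "k \<notin> snd ` set (leaves Q')" "k \<notin> snd ` set (leaves R')" by auto
  then show "bot_node \<notin> tnodes mkQ Q'" "bot_node \<notin> tnodes mkR R'"
    using LeafN_in_tnodes by blast+
qed

lemma cut_edges: "{cut_node, LeafN i} \<in> outer_edges C G s" "{cut_node, LeafN j} \<in> outer_edges C G s"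
proof -
  have "tedges (SeqN 0) (G ! 0) s \<subseteq> outer_edges C G s" unfolding outer_edges_def by auto
  then show "{cut_node, LeafN i} \<in> outer_edges C G s" "{cut_node, LeafN j} \<in> outer_edges C G s"
    by (auto simp: tedges_Cut)
qed

lemma leaf_i_in_R: "tnode mkR R' (hpos R) = LeafN i" "hpos R \<in> pos R'"
  using tnode_fill[of mkR R "Leaf (x, i)" "[]"] pos_fill[of R "[]" "Leaf (x, i)"] by simp_all

text \<open>The nodes that the tensor node can reach within the redex and the cut, after rerouting
  the switching inside the redex.\<close>

definition inner_nodes :: "node set" where
  "inner_nodes = {cut_node, par_node, tens_node} \<union> tnodes mkQ Q' \<union> tnodes mkR R'"

lemma bot_node_notin_inner: "bot_node \<notin> inner_nodes"
  unfolding inner_nodes_def using bot_node_notin_Q_R by auto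

lemma Q_R_subset_inner: "tnodes mkQ Q' \<subseteq> inner_nodes" "tnodes mkR R' \<subseteq> inner_nodes"
  unfolding inner_nodes_def by blast+

lemma roots_in_inner:
  "par_node \<in> inner_nodes" "tens_node \<in> inner_nodes" "Q_root \<in> inner_nodes" "R_root \<in> inner_nodes"
  "cut_node \<in> inner_nodes"
proof -
  have "Q_root \<in> tnodes mkQ Q'" "R_root \<in> tnodes mkR R'" unfolding tnodes_iff by force+
  then show "par_node \<in> inner_nodes" "tens_node \<in> inner_nodes" "Q_root \<in> inner_nodes"
    "R_root \<in> inner_nodes" "cut_node \<in> inner_nodes"
    unfolding inner_nodes_def by blast+
qed

lemma redex_edge_inner:
  assumes "e \<in> tedges (\<lambda>q. LinkN (h @ q)) lhs s" "e \<noteq> {tens_node, bot_node}"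
  shows "e \<subseteq> inner_nodes"
proof -
  have "e \<subseteq> tnodes mkQ Q'" if "e \<in> tedges mkQ Q' s" using that by (rule tedges_subset_tnodes)
  moreover have "e \<subseteq> tnodes mkR R'" if "e \<in> tedges mkR R' s" using that by (rule tedges_subset_tnodes)
  ultimately show ?thesis
    using assms Q_R_subset_inner roots_in_inner unfolding redex_edges by (auto split: if_splits)
qed

abbreviation "inner_edges s \<equiv> {e \<in> sw_edges (fill C lhs) G s. e \<subseteq> inner_nodes}"

lemma inner_edge:
  "{a, b} \<in> sw_edges (fill C lhs) G s \<Longrightarrow> a \<in> inner_nodes \<Longrightarrow> b \<in> inner_nodes \<Longrightarrow>
   (adj (inner_edges s))\<^sup>*\<^sup>* a b"
  by (rule rtranclp_adj_edge) simp

lemma Q_R_edges_subset_inner: "tedges mkQ Q' s \<subseteq> inner_edges s" "tedges mkR R' s \<subseteq> inner_edges s"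
  using tedges_subset_tnodes Q_R_subset_inner unfolding sw_edges_lhs redex_edges by blast+

lemma path_down_Q:
  "q \<in> pos Q' \<Longrightarrow> (\<And>p c r. q = p @ c # r \<Longrightarrow> s (mkQ p) = (\<not> c)) \<Longrightarrow>
   (adj (inner_edges s))\<^sup>*\<^sup>* Q_root (tnode mkQ Q' q)"
  using tedges_path_down[of q Q' s mkQ] rtranclp_adj_mono[OF Q_R_edges_subset_inner(1)] by simp

lemma path_down_R:
  "r \<in> pos R' \<Longrightarrow> (\<And>p c r'. r = p @ c # r' \<Longrightarrow> s (mkR p) = (\<not> c)) \<Longrightarrow>
   (adj (inner_edges s))\<^sup>*\<^sup>* R_root (tnode mkR R' r)"
  using tedges_path_down[of r R' s mkR] rtranclp_adj_mono[OF Q_R_edges_subset_inner(2)] by simp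

lemma tens_node_reaches_R:
  assumes "r \<in> pos R'" "\<And>p c r'. r = p @ c # r' \<Longrightarrow> s (mkR p) = (\<not> c)"
  shows "(adj (inner_edges s))\<^sup>*\<^sup>* tens_node (tnode mkR R' r)"
proof -
  have "{tens_node, R_root} \<in> sw_edges (fill C lhs) G s" unfolding sw_edges_lhs redex_edges by blast
  then have "(adj (inner_edges s))\<^sup>*\<^sup>* tens_node R_root" using inner_edge roots_in_inner by blast
  then show ?thesis using path_down_R[of r s, OF assms] by (rule rtranclp_trans)
qed

lemma tens_node_reaches_cut:
  assumes "\<And>p c r. hpos R = p @ c # r \<Longrightarrow> s (mkR p) = (\<not> c)"
  shows "(adj (inner_edges s))\<^sup>*\<^sup>* tens_node cut_node"
proof -
  have to_leaf: "(adj (inner_edges s))\<^sup>*\<^sup>* tens_node (LeafN i)"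
    using tens_node_reaches_R[of "hpos R" s, OF leaf_i_in_R(2) assms] leaf_i_in_R(1) by simp
  have "LeafN i \<in> inner_nodes" using leaf_i_in_R Q_R_subset_inner(2) unfolding tnodes_def by force
  moreover have "{LeafN i, cut_node} \<in> sw_edges (fill C lhs) G s"
    using cut_edges(1) unfolding sw_edges_lhs by (simp add: insert_commute)
  ultimately have "(adj (inner_edges s))\<^sup>*\<^sup>* (LeafN i) cut_node"
    using inner_edge roots_in_inner by blast
  with to_leaf show ?thesis by (rule rtranclp_trans)
qed

lemma route_outside_hole:
  "\<forall>q. n \<noteq> LinkN (h @ q) \<Longrightarrow> route (h @ g) q' s n = s n"
  by (rule route_other) auto

lemma tens_node_reaches_Q:
  assumes "q \<in> pos Q'"
    and R_route: "\<And>p c r. hpos R = p @ c # r \<Longrightarrow> s (mkR p) = (\<not> c)"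
    and Q_route: "\<And>p c r. q = p @ c # r \<Longrightarrow> s (mkQ p) = (\<not> c)"
  shows "(adj (inner_edges s))\<^sup>*\<^sup>* tens_node (tnode mkQ Q' q)"
proof -
  have "tnode mkQ Q' [False] = LeafN j" by simp
  then have "LeafN j \<in> inner_nodes" using Q_R_subset_inner(1) unfolding tnodes_def by force
  then have "(adj (inner_edges s))\<^sup>*\<^sup>* cut_node (LeafN j)"
    using inner_edge roots_in_inner cut_edges(2) unfolding sw_edges_lhs by blast
  moreover have "{LeafN j, Q_root} \<in> tedges mkQ Q' s" by (simp add: tedges_Tens insert_commute)
  then have "(adj (inner_edges s))\<^sup>*\<^sup>* (LeafN j) Q_root"
    using Q_R_edges_subset_inner(1) rtranclp_adj_edge by blast
  ultimately show ?thesis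
    using tens_node_reaches_cut[of s, OF R_route] path_down_Q[of q s, OF assms(1) Q_route]
    by (meson rtranclp_trans)
qed

lemma tens_node_reaches_Q_routed:
  fixes s :: switching
  assumes "q \<in> pos Q'"
  defines "s' \<equiv> route (h @ [False]) q (route (h @ [True, False]) (hpos R) s)"
  shows "(adj (inner_edges s'))\<^sup>*\<^sup>* tens_node (tnode mkQ Q' q)"
proof (rule tens_node_reaches_Q[OF assms(1)])
  show "s' (mkR p) = (\<not> c)" if "hpos R = p @ c # r" for p c r
    using route_above[OF that, of "h @ [True, False]" s] unfolding s'_def by (subst route_other) auto
  show "s' (mkQ p) = (\<not> c)" if "q = p @ c # r" for p c r
    using route_above[OF that, of "h @ [False]"] unfolding s'_def by simp
qed

lemma tens_node_reaches_inner:
  assumes "m \<in> inner_nodes"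
  obtains s' where "\<And>n. \<forall>q. n \<noteq> LinkN (h @ q) \<Longrightarrow> s' n = s n" "(adj (inner_edges s'))\<^sup>*\<^sup>* tens_node m"
proof -
  define sR where "sR = route (h @ [True, False]) (hpos R) s"
  have sR_agree: "sR n = s n" if "\<forall>q. n \<noteq> LinkN (h @ q)" for n
    using that route_outside_hole[of n] unfolding sR_def by simp
  have sR_R: "sR (mkR p) = (\<not> c)" if "hpos R = p @ c # r" for p c r
    using route_above[OF that, of "h @ [True, False]" s] unfolding sR_def by simp
  from assms consider "m = cut_node" | "m = par_node" | "m = tens_node"
    | q where "q \<in> pos Q'" "m = tnode mkQ Q' q" | r where "r \<in> pos R'" "m = tnode mkR R' r"
    unfolding inner_nodes_def tnodes_def by blast
  then show ?thesis
  proof cases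
    case 1
    have "(adj (inner_edges sR))\<^sup>*\<^sup>* tens_node m"
      unfolding 1 by (rule tens_node_reaches_cut) (rule sR_R)
    with sR_agree show ?thesis by (rule that)
  next
    case 2
    define s' where "s' = s(par_node := False)"
    have "{tens_node, par_node} \<in> sw_edges (fill C lhs) G s'"
      unfolding sw_edges_lhs redex_edges s'_def by (simp add: insert_commute)
    then have "(adj (inner_edges s'))\<^sup>*\<^sup>* tens_node m" using inner_edge roots_in_inner 2 by blast
    then show ?thesis using that[of s'] unfolding s'_def by (metis append_Nil2 fun_upd_other)
  next
    case 3
    then show ?thesis using that[of s] by blast
  next
    case (4 q)
    have "route (h @ [False]) q sR n = s n" if "\<forall>q. n \<noteq> LinkN (h @ q)" for n
      using that route_outside_hole[of n] sR_agree by simp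
    moreover have "(adj (inner_edges (route (h @ [False]) q sR)))\<^sup>*\<^sup>* tens_node m"
      using tens_node_reaches_Q_routed[OF 4(1)] 4(2) unfolding sR_def by simp
    ultimately show ?thesis by (rule that)
  next
    case (5 r)
    define s' where "s' = route (h @ [True, False]) r s"
    have "s' n = s n" if "\<forall>q. n \<noteq> LinkN (h @ q)" for n
      using that route_outside_hole[of n] unfolding s'_def by simp
    moreover have "(adj (inner_edges s'))\<^sup>*\<^sup>* tens_node m"
      unfolding 5(2) using 5(1) route_above[of r _ _ _ "h @ [True, False]" s] unfolding s'_def
      by (intro tens_node_reaches_R) auto
    ultimately show ?thesis by (rule that)
  qed
qed

lemma edge_leaving_inner_is_outer:
  assumes "e \<in> sw_edges (fill C lhs) G s" "e \<noteq> {tens_node, bot_node}" "\<not> e \<subseteq> inner_nodes"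
  shows "e \<in> outer_edges C G s"
  using assms redex_edge_inner unfolding sw_edges_lhs by blast

text \<open>Such a walk, a path from the tensor node to \<open>m\<close> inside \<open>inner_nodes\<close> for a rerouted
  switching, and the edge between the tensor node and the bottom node would form a cycle.\<close>

lemma no_outer_walk_from_bot_into_inner:
  assumes L: "walk (outer_edges C G s) L" "distinct L" "L \<noteq> []" "hd L = bot_node" "set L \<subseteq> -inner_nodes"
    and m: "m \<in> inner_nodes" "{last L, m} \<in> outer_edges C G s"
  shows False
proof -
  obtain s' where agree: "\<And>n. \<forall>q. n \<noteq> LinkN (h @ q) \<Longrightarrow> s' n = s n"
    and reach: "(adj (inner_edges s'))\<^sup>*\<^sup>* tens_node m"
    using tens_node_reaches_inner m(1) by blast
  have same_outer: "outer_edges C G s' = outer_edges C G s"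
    by (rule outer_edges_cong) (use agree in auto)
  obtain D where D: "walk (inner_edges s') D" "distinct D" "D \<noteq> []" "hd D = tens_node" "last D = m"
    using rtranclp_adj_distinct_walk[OF reach] by blast
  have "set D \<subseteq> inner_nodes" using walk_within[OF D(1,3)] D(4) roots_in_inner by blast
  moreover have "walk (sw_edges (fill C lhs) G s') D" using D(1) walk_mono by blast
  moreover have "walk (sw_edges (fill C lhs) G s') L"
    using L(1) same_outer unfolding sw_edges_lhs by (auto intro: walk_mono)
  moreover have "{last D, last L} \<in> sw_edges (fill C lhs) G s'"
    using m(2) same_outer D(5) unfolding sw_edges_lhs by (simp add: insert_commute)
  moreover have "{hd L, hd D} \<in> sw_edges (fill C lhs) G s'"
    using D(4) L(4) unfolding sw_edges_lhs redex_edges by (simp add: insert_commute)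
  moreover have "length D + length L \<ge> 3"
  proof (rule ccontr)
    assume "\<not> 3 \<le> length D + length L"
    moreover have "length D > 0" "length L > 0" using D(3) L(3) by simp_all
    ultimately have "length D = 1" by linarith
    then have "m = tens_node" using D(4,5) by (cases D) auto
    then show False using outer_edges_below_hole[OF m(2), of True "[]"] by simp
  qed
  ultimately have "has_cycle (sw_edges (fill C lhs) G s')"
    using has_cycle_join_walks D(2,3) L(2,3,5) by blast
  then show False using proof_graph_lhs unfolding proof_graph_def graph_acyclic_def by blast
qed

lemma empty_notin_sw_edges: "{} \<notin> sw_edges (fill C lhs) G s"
  unfolding sw_edges_def tedges_def by blast

lemma Q_node_not_connected_to_bot:
  assumes "q \<in> pos Q'"
  shows "\<not> (adj (sw_edges (fill C lhs) G s - {{tens_node, bot_node}}))\<^sup>*\<^sup>* (tnode mkQ Q' q) bot_node"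
proof
  define E where "E = sw_edges (fill C lhs) G s - {{tens_node, bot_node}}"
  assume "(adj E)\<^sup>*\<^sup>* (tnode mkQ Q' q) bot_node"
  then have "(adj E)\<^sup>*\<^sup>* bot_node (tnode mkQ Q' q)" by (rule rtranclp_adj_sym)
  moreover have "tnode mkQ Q' q \<in> inner_nodes" using assms Q_R_subset_inner(1) unfolding tnodes_def by blast
  ultimately obtain w m where w: "(adj {e \<in> E. e \<subseteq> -inner_nodes})\<^sup>*\<^sup>* bot_node w" "w \<in> -inner_nodes"
    and m: "m \<notin> -inner_nodes" "{w, m} \<in> E"
    using first_exit[of E bot_node _ "-inner_nodes"] bot_node_notin_inner by blast
  have "{e \<in> E. e \<subseteq> -inner_nodes} \<subseteq> outer_edges C G s"
  proof
    fix e assume e: "e \<in> {e \<in> E. e \<subseteq> -inner_nodes}"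
    then have "e \<noteq> {}" using empty_notin_sw_edges unfolding E_def by blast
    then show "e \<in> outer_edges C G s" using e edge_leaving_inner_is_outer unfolding E_def by blast
  qed
  moreover obtain L where L: "walk {e \<in> E. e \<subseteq> -inner_nodes} L" "distinct L" "L \<noteq> []"
    "hd L = bot_node" "last L = w"
    using rtranclp_adj_distinct_walk[OF w(1)] by blast
  moreover have "set L \<subseteq> -inner_nodes" using walk_within[OF L(1,3)] L(4) bot_node_notin_inner by blast
  moreover have "{last L, m} \<in> outer_edges C G s"
    using edge_leaving_inner_is_outer m(2) w(2) L(5) unfolding E_def by blast
  ultimately show False using no_outer_walk_from_bot_into_inner m(1) walk_mono by blast
qed

lemma side_cond_lhs: "side_cond (fill C lhs) G h Q' k"
  unfolding side_cond_def using Q_node_not_connected_to_bot by (simp add: tnode_fill)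

end

section \<open>The rewritten redex is a proof graph\<close>

text \<open>Positions of \<open>Q \<parr> (R \<otimes> z)\<close> mapped to the corresponding positions of \<open>(Q \<parr> R) \<otimes> z\<close>;
  the tensor node of the former becomes the par node of the latter.\<close>

fun assoc_pos :: "bool list \<Rightarrow> bool list" where
  "assoc_pos [] = []"
| "assoc_pos (False # q) = False # False # q"
| "assoc_pos [True] = [False]"
| "assoc_pos (True # False # r) = False # True # r"
| "assoc_pos (True # True # z) = True # z"

lemma inj_assoc_pos: "inj assoc_pos"
proof (rule injI)
  fix a b :: "bool list" assume "assoc_pos a = assoc_pos b"
  then show "a = b" by (cases a rule: assoc_pos.cases; cases b rule: assoc_pos.cases) auto
qed

context cut_redex
begin

abbreviation "relabel \<equiv> relabel_below h assoc_pos"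

definition frame_edges :: "switching \<Rightarrow> node set set" where
  "frame_edges s = outer_edges C G s \<union> tedges mkQ Q' s \<union> tedges mkR R' s"

lemma sw_edges_lhs_frame:
  "sw_edges (fill C lhs) G s = frame_edges s \<union>
     {if s par_node then {par_node, Q_root} else {par_node, tens_node},
      {tens_node, R_root}, {tens_node, bot_node}}"
  unfolding sw_edges_lhs redex_edges frame_edges_def by auto

lemma frame_edges_update_par: "frame_edges (s(par_node := v)) = frame_edges s"
proof -
  have "outer_edges C G (s(par_node := v)) = outer_edges C G s"
    by (rule outer_edges_cong) (metis append_Nil2 fun_upd_other)
  moreover have "tedges mkQ Q' (s(par_node := v)) = tedges mkQ Q' s"
    "tedges mkR R' (s(par_node := v)) = tedges mkR R' s"
    by (rule tedges_cong; simp)+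
  ultimately show ?thesis unfolding frame_edges_def by simp
qed

lemma frame_edges_nodes:
  assumes "e \<in> frame_edges s"
  shows "tens_node \<notin> e" "\<not> (par_node \<in> e \<and> Q_root \<in> e)"
proof -
  have not_tnode: "tens_node \<notin> tnodes mkQ Q'" "par_node \<notin> tnodes mkQ Q'"
    "tens_node \<notin> tnodes mkR R'" "par_node \<notin> tnodes mkR R'"
    using tnodes_cases[of tens_node mkQ Q'] tnodes_cases[of par_node mkQ Q']
      tnodes_cases[of tens_node mkR R'] tnodes_cases[of par_node mkR R'] by auto
  have "e \<in> outer_edges C G s \<or> e \<subseteq> tnodes mkQ Q' \<or> e \<subseteq> tnodes mkR R'"
    using assms tedges_subset_tnodes unfolding frame_edges_def by blast
  then show "tens_node \<notin> e" "\<not> (par_node \<in> e \<and> Q_root \<in> e)"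
    using outer_edges_below_hole[of e C G s True "[]"] outer_edges_below_hole[of e C G s False "[]"]
      not_tnode by auto
qed

lemma redex_nodes_distinct:
  "par_node \<noteq> R_root" "tens_node \<noteq> R_root" "R_root \<noteq> bot_node"
proof -
  have "R_root \<in> tnodes mkR R'" unfolding tnodes_iff by force
  then show "R_root \<noteq> bot_node" using bot_node_notin_Q_R(2) by metis
  show "par_node \<noteq> R_root" "tens_node \<noteq> R_root"
    using tnode_cases[of mkR R' "[]"] by auto
qed

lemma relabel_simps:
  "relabel par_node = par_node" "relabel tens_node = Q_root" "relabel Q_root = LinkN (h @ [False, False])"
  "relabel R_root = tnode (\<lambda>q. LinkN (h @ False # True # q)) R' []"
  using relabel_below_root[of assoc_pos h]
    tnode_relabel_below[of assoc_pos "[True, False]" "[False, True]" h R' "[]"] by simp_all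

lemma relabel_Q_R:
  "(`) relabel ` tedges mkQ Q' (\<lambda>n. s (relabel n)) = tedges (\<lambda>q. LinkN (h @ False # False # q)) Q' s"
  "(`) relabel ` tedges mkR R' (\<lambda>n. s (relabel n)) = tedges (\<lambda>q. LinkN (h @ False # True # q)) R' s"
  "relabel ` tnodes mkQ Q' = tnodes (\<lambda>q. LinkN (h @ False # False # q)) Q'"
  "relabel ` tnodes mkR R' = tnodes (\<lambda>q. LinkN (h @ False # True # q)) R'"
  using tedges_relabel_below[of assoc_pos "[False]" "[False, False]" "\<lambda>n. s (relabel n)" h s Q']
    tedges_relabel_below[of assoc_pos "[True, False]" "[False, True]" "\<lambda>n. s (relabel n)" h s R']
    tnodes_relabel_below[of assoc_pos "[False]" "[False, False]" h Q']
    tnodes_relabel_below[of assoc_pos "[True, False]" "[False, True]" h R']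
  by simp_all

lemma sw_edges_rhs:
  "sw_edges (fill C rhs) G s = (`) relabel ` (frame_edges (\<lambda>n. s (relabel n)) \<union>
     {{par_node, tens_node}, {par_node, bot_node}, if s Q_root then {tens_node, Q_root} else {tens_node, R_root}})"
proof -
  have outer: "(`) relabel ` outer_edges C G (\<lambda>n. s (relabel n)) = outer_edges C G s"
    by (rule relabel_below_outer_edges) (simp_all add: relabel_below_outside)
  have "sw_edges (fill C rhs) G s = outer_edges C G s \<union>
      ({{par_node, Q_root}, {par_node, bot_node}}
       \<union> (if s Q_root then {{Q_root, LinkN (h @ [False, False])}}
          else {{Q_root, tnode (\<lambda>q. LinkN (h @ False # True # q)) R' []}})
       \<union> tedges (\<lambda>q. LinkN (h @ False # False # q)) Q' s \<union> tedges (\<lambda>q. LinkN (h @ False # True # q)) R' s)"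
    unfolding sw_edges_fill[of rhs, simplified]
    by (simp add: tedges_Tens[of _ "Par Q' R'"] tedges_Par[of _ Q' R'] tedges_Leaf Un_ac)
  then show ?thesis unfolding frame_edges_def image_Un outer relabel_Q_R using relabel_simps by auto
qed

lemma pg_nodes_rhs: "pg_nodes (fill C rhs) G = relabel ` pg_nodes (fill C lhs) G"
  unfolding pg_nodes_fill[of rhs, simplified] pg_nodes_fill[of lhs, simplified]
  using relabel_simps relabel_Q_R relabel_below_outer_nodes[of assoc_pos C G]
  by (simp add: tnodes_simps(1)[of _ "Par Q' R'"] tnodes_simps(2)[of _ Q' R']
      tnodes_simps(2)[of _ Q' "Tens R' (Leaf (Bot, k))"] tnodes_simps(1)[of _ R'] tnodes_simps(4)
      image_Un Un_ac insert_commute)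

text \<open>The switching graphs of \<open>Q \<parr> (R \<otimes> z)\<close> are a common frame plus the edges
  \<open>{par, tens}\<close> or \<open>{par, Q}\<close>, and \<open>{tens, R}\<close>, \<open>{tens, z}\<close>; those of \<open>(Q \<parr> R) \<otimes> z\<close>, pulled back
  along \<open>relabel\<close>, are the frame plus \<open>{par, tens}\<close>, \<open>{par, z}\<close> and \<open>{tens, R}\<close> or \<open>{tens, Q}\<close>.
  Both arise from a tree of the first kind by edge exchanges; replacing \<open>{tens, R}\<close> by
  \<open>{tens, Q}\<close> needs \<open>Q\<close> and \<open>z\<close> to be disconnected, which is the side condition.\<close>

lemma spanning_tree_rhs_preimage:
  "spanning_tree (pg_nodes (fill C lhs) G) (frame_edges s \<union>
     {{par_node, tens_node}, {par_node, bot_node}, if b then {tens_node, Q_root} else {tens_node, R_root}})"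
proof -
  have sw: "sw_edges (fill C lhs) G (s(par_node := v)) = frame_edges s \<union>
      {if v then {par_node, Q_root} else {par_node, tens_node}, {tens_node, R_root}, {tens_node, bot_node}}" for v
    unfolding sw_edges_lhs_frame frame_edges_update_par by simp
  have T0: "spanning_tree (pg_nodes (fill C lhs) G)
      (frame_edges s \<union> {{par_node, tens_node}, {tens_node, R_root}, {tens_node, bot_node}})"
    using proof_graph_spanning_tree[OF proof_graph_lhs, of "s(par_node := False)"] unfolding sw by simp
  have T1: "spanning_tree (pg_nodes (fill C lhs) G)
      (frame_edges s \<union> {{par_node, Q_root}, {tens_node, R_root}, {tens_node, bot_node}})"
    using proof_graph_spanning_tree[OF proof_graph_lhs, of "s(par_node := True)"] unfolding sw by simp
  have isolated: "\<forall>e\<in>frame_edges s. tens_node \<notin> e" using frame_edges_nodes(1) by blast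
  have par_Q: "{par_node, Q_root} \<notin> frame_edges s" using frame_edges_nodes(2) by blast
  note dist = redex_nodes_distinct
  have "sw_edges (fill C lhs) G (s(par_node := True)) - {{tens_node, bot_node}}
      = frame_edges s \<union> {{par_node, Q_root}, {tens_node, R_root}}"
  proof -
    have "{tens_node, bot_node} \<notin> frame_edges s" using isolated by blast
    moreover have "{tens_node, bot_node} \<noteq> {par_node, Q_root}" "{tens_node, bot_node} \<noteq> {tens_node, R_root}"
      using dist(3) by (auto simp: doubleton_eq_iff)
    ultimately show ?thesis unfolding sw by auto
  qed
  then have Q_bot: "\<not> (adj (frame_edges s \<union> {{par_node, Q_root}, {tens_node, R_root}}))\<^sup>*\<^sup>* Q_root bot_node"
    using Q_node_not_connected_to_bot[of "[]" "s(par_node := True)"] by simp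
  have "Q_root \<in> tnodes mkQ Q'" unfolding tnodes_iff by (metis Nil_in_pos tnode_Nil(1))
  then have V: "tens_node \<in> pg_nodes (fill C lhs) G" "Q_root \<in> pg_nodes (fill C lhs) G"
    unfolding pg_nodes_lhs by blast+
  have T2: "spanning_tree (pg_nodes (fill C lhs) G)
      (frame_edges s \<union> {{par_node, tens_node}, {par_node, bot_node}, {tens_node, R_root}})"
    by (rule spanning_tree_move_leaf[OF T0 isolated]) (use dist(3) V(1) in simp_all)
  moreover have "spanning_tree (pg_nodes (fill C lhs) G)
      (frame_edges s \<union> {{par_node, tens_node}, {par_node, bot_node}, {tens_node, Q_root}})"
  proof (rule spanning_tree_replace_child[OF T2 _ Q_bot isolated par_Q])
    show "graph_acyclic (frame_edges s \<union> {{par_node, Q_root}, {tens_node, R_root}, {tens_node, bot_node}})"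
      using T1 unfolding spanning_tree_def by blast
  qed (use dist(1,2) V in simp_all)
  ultimately show ?thesis by (cases b) (simp_all add: insert_commute)
qed

lemma proof_graph_rhs: "proof_graph (fill C rhs) G"
proof (rule proof_graph_relabel[OF proof_graph_lhs])
  have "linking (fill C lhs)" using proof_graph_lhs unfolding proof_graph_def by blast
  moreover have "linking lhs" using linking_fill_inner[OF calculation] by simp
  then have "linking Q'" "linking R'" by (auto elim!: linking.cases)
  then have "linking rhs" by (intro l_botr l_par)
  ultimately show "linking (fill C rhs)" using linking_fill_replace[of C lhs rhs] by simp
  show "mset (leaves (fill C rhs)) = mset (leaves (fill C lhs))" by (rule mset_leaves_fill) simp
  show "inj relabel" by (rule inj_relabel_below[OF inj_assoc_pos])
  show "pg_nodes (fill C rhs) G = relabel ` pg_nodes (fill C lhs) G" by (rule pg_nodes_rhs)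
  show "\<exists>E. spanning_tree (pg_nodes (fill C lhs) G) E \<and> sw_edges (fill C rhs) G s = (`) relabel ` E" for s
    using sw_edges_rhs spanning_tree_rhs_preimage by blast
qed

lemma pg_step_lhs_rhs: "pg_step G (fill C lhs) (fill C rhs)"
  unfolding pg_step_def local_rule_def using proof_graph_lhs proof_graph_rhs side_cond_lhs by blast

end

theorem lemma1p20:
  fixes P R :: "leaf ctx" and Q :: "leaf tree" and \<Gamma> :: "leaf tree list"
    and x :: lit and i j k :: nat
  assumes "proof_graph
     (fill P (Par (Tens (Leaf (Bot, k)) (fill R (Leaf (x, i))))
                  (Tens (Leaf (dlit x, j)) Q)))
     (Cut (Leaf (x, i)) (Leaf (dlit x, j)) # \<Gamma>)"
  shows "pg_equiv (Cut (Leaf (x, i)) (Leaf (dlit x, j)) # \<Gamma>)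
     (fill P (Par (Tens (Leaf (Bot, k)) (fill R (Leaf (x, i))))
                  (Tens (Leaf (dlit x, j)) Q)))
     (fill P (Tens (Leaf (Bot, k)) (Par (fill R (Leaf (x, i)))
                  (Tens (Leaf (dlit x, j)) Q))))"
proof -
  let ?Z = "Leaf (Bot, k)" and ?R' = "fill R (Leaf (x, i))" and ?Q' = "Tens (Leaf (dlit x, j)) Q"
    and ?G = "Cut (Leaf (x, i)) (Leaf (dlit x, j)) # \<Gamma>"
  have step1: "pg_step ?G (fill P (Par (Tens ?Z ?R') ?Q')) (fill P (Par (Tens ?R' ?Z) ?Q'))"
    using pg_step_Tens_commute[of "ctx_comp P (CParL Hole ?Q')"] assms by (simp add: fill_ctx_comp)
  then have step2: "pg_step ?G (fill P (Par (Tens ?R' ?Z) ?Q')) (fill P (Par ?Q' (Tens ?R' ?Z)))"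
    by (intro pg_step_Par_commute) (simp add: pg_step_def)
  then interpret cut_redex P R Q \<Gamma> x i j k
    by unfold_locales (simp add: pg_step_def)
  have step4: "pg_step ?G (fill P (Tens (Par ?Q' ?R') ?Z)) (fill P (Tens (Par ?R' ?Q') ?Z))"
    using pg_step_Par_commute[of "ctx_comp P (CTensL Hole ?Z)"] proof_graph_rhs by (simp add: fill_ctx_comp)
  then have step5: "pg_step ?G (fill P (Tens (Par ?R' ?Q') ?Z)) (fill P (Tens ?Z (Par ?R' ?Q')))"
    by (intro pg_step_Tens_commute) (simp add: pg_step_def)
  show ?thesis
    using pg_equiv_step[OF step1 pg_equiv_step[OF step2 pg_equiv_step[OF pg_step_lhs_rhs
        pg_equiv_step[OF step4 pg_step_equiv[OF step5]]]]] .
qed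

end
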